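(* Let $\mu,\nu$ be probability measures on $\mathbb{R}^d$ with finite first moments, i.e. $\int |x|\,\mu(dx)<\infty$ and $\int |y|\,\nu(dy)<\infty$. Then \[ \inf_{f\in \mathcal{C}^1(\mathbb{R}^d)}\left(\int f\,d\nu - \int f\,d\mu \right)=\inf_{\rho\in \mathcal{P}^1(\mathbb{R}^d)} \left( C(\nu,\rho)-C(\mu,\rho)\right), \] where $\mathcal{P}^1(\mathbb{R}^d):=\{\rho\in \mathcal{P}(\mathbb{R}^d): \mathrm{supp}(\rho)\subseteq B_1(0)\}$ and $\mathcal{C}^1(\mathbb{R}^d):=\{f:\mathbb{R}^d\to \mathbb{R} \text{ convex and } 1\text{-Lipschitz}\}$.
   Context: $\mathcal{P}(\mathbb{R}^d)$ is the set of Borel probability measures on $\mathbb{R}^d$; $B_1(0)$ is the closed/open Euclidean unit ball around $0$ (support contained in the unit ball). For probability measures $\alpha,\rho$ on $\mathbb{R}^d$, $\Pi(\alpha,\rho)$ denotes the set of couplings (probability measures on $\mathbb{R}^d\times\mathbb{R}^d$ with marginals $\alpha$ and $\rho$), and $C(\alpha,\rho):=\sup_{\pi\in\Pi(\alpha,\rho)}\int \langle x,y\rangle\,\pi(dx,dy)$, with $\langle\cdot,\cdot\rangle$ the Euclidean scalar product. *)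

theory Defs
  imports "HOL-Probability.Probability"
begin

definition prob_measures :: "('a::euclidean_space) measure set" where
  "prob_measures = {M. prob_space M \<and> sets M = sets borel}"

definition measure_support :: "('a::metric_space) measure \<Rightarrow> 'a set" where
  "measure_support M = {x. \<forall>e>0. emeasure M (ball x e) > 0}"

definition couplings :: "('a::euclidean_space) measure \<Rightarrow> 'a measure \<Rightarrow> ('a \<times> 'a) measure set" where
  "couplings \<alpha> \<rho> = {\<pi>. prob_space \<pi> \<and> sets \<pi> = sets (borel \<Otimes>\<^sub>M borel)
      \<and> distr \<pi> borel fst = \<alpha> \<and> distr \<pi> borel snd = \<rho>}"

definition Ccost :: "('a::euclidean_space) measure \<Rightarrow> 'a measure \<Rightarrow> real" where
  "Ccost \<alpha> \<rho> = (SUP \<pi>\<in>couplings \<alpha> \<rho>. \<integral>z. (fst z \<bullet> snd z) \<partial>\<pi>)"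

definition P1 :: "('a::euclidean_space) measure set" where
  "P1 = {\<rho>\<in>prob_measures. measure_support \<rho> \<subseteq> cball 0 1}"

definition C1 :: "(('a::euclidean_space) \<Rightarrow> real) set" where
  "C1 = {f. convex_on UNIV f \<and> 1-lipschitz_on UNIV f}"

end

theory Submission
  imports Defs
begin

text \<open>
  For convex \<open>f\<close> with conjugate \<open>f\<^sup>*\<close>, the Fenchel--Young inequality \<open>x \<bullet> y \<le> f x + f\<^sup>* y\<close> gives
  \<open>C(\<alpha>, \<rho>) \<le> \<integral>f d\<alpha> + \<integral>f\<^sup>* d\<rho>\<close> for every \<open>\<alpha>\<close>, with equality for a coupling supported on the graph
  of a subgradient of \<open>f\<close>; if \<open>f\<close> is 1-Lipschitz its subgradients lie in the unit ball.
  Given \<open>f \<in> C1\<close>, push \<open>\<mu>\<close> forward along a subgradient of \<open>f\<close> to obtain \<open>\<rho> \<in> P1\<close>: then equality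
  holds for \<open>(\<mu>, \<rho>)\<close> and the inequality for \<open>(\<nu>, \<rho>)\<close>, so \<open>C(\<nu>, \<rho>) - C(\<mu>, \<rho>) \<le> \<integral>f d\<nu> - \<integral>f d\<mu>\<close>.
  Conversely, given \<open>\<rho> \<in> P1\<close>, take Kantorovich potentials \<open>(f, f\<^sup>*)\<close> of an optimal coupling of
  \<open>(\<nu>, \<rho>)\<close>, with \<open>f\<close> a supremum of affine functions whose slopes lie in the support of \<open>\<rho>\<close>, hence
  \<open>f \<in> C1\<close>: now equality holds for \<open>(\<nu>, \<rho>)\<close> and the inequality for \<open>(\<mu>, \<rho>)\<close>.

  Both constructions are carried out after quantizing the measures to finite grids, at a cost
  controlled by the first moments.  There subgradient selections are simple functions, optimal
  plans exist by compactness, their supports are cyclically monotone, Rockafellar's construction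
  yields the potentials, and a discrete plan lifts to a coupling that is conditionally independent
  on each grid cell.
\<close>

section \<open>Convex 1-Lipschitz functions\<close>

lemma convex_on_supporting_hyperplane:
  fixes f :: "'a::euclidean_space \<Rightarrow> real"
  assumes cvx: "convex_on UNIV f" and cont: "continuous_on UNIV f"
  obtains a b where "(a, b) \<noteq> 0" and "\<And>y t. f y \<le> t \<Longrightarrow> a \<bullet> x + b * f x \<le> a \<bullet> y + b * t"
proof -
  define S where "S = epigraph UNIV f"
  have "continuous_on UNIV (\<lambda>p :: 'a \<times> real. f (fst p))"
    using continuous_on_compose2[OF cont continuous_on_fst[OF continuous_on_id]] by fastforce
  then have "open {p :: 'a \<times> real. f (fst p) < snd p}"
    by (rule open_Collect_less) (intro continuous_on_snd continuous_on_id)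
  moreover have "{p :: 'a \<times> real. f (fst p) < snd p} \<subseteq> S" by (auto simp: S_def epigraph_def)
  ultimately have "(x, f x + 1) \<in> interior S" by (intro interior_maximal[THEN subsetD]) auto
  then have "rel_interior S = interior S"
    by (metis affine_hull_nonempty_interior empty_iff rel_interior_interior)
  moreover have "(x, f x) \<notin> interior S"
  proof
    assume "(x, f x) \<in> interior S"
    then obtain e where "e > 0" "ball (x, f x) e \<subseteq> S"
      by (meson open_contains_ball_eq open_interior interior_subset subset_trans)
    moreover have "(x, f x - e/2) \<in> ball (x, f x) e" using \<open>e > 0\<close> by (simp add: dist_Pair_Pair dist_real_def)
    ultimately show False using \<open>e > 0\<close> by (auto simp: S_def mem_epigraph)
  qed
  ultimately have "(x, f x) \<notin> rel_interior S" by simp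
  moreover have "convex S" "(x, f x) \<in> S"
    using cvx by (simp_all add: S_def convex_epigraph mem_epigraph)
  ultimately obtain c where c: "c \<noteq> 0" "\<And>p. p \<in> S \<Longrightarrow> c \<bullet> (x, f x) \<le> c \<bullet> p"
    using supporting_hyperplane_rel_boundary by metis
  show thesis
  proof (rule that)
    show "(fst c, snd c) \<noteq> 0" using c(1) by simp
    show "fst c \<bullet> x + snd c * f x \<le> fst c \<bullet> y + snd c * t" if "f y \<le> t" for y t
      using c(2)[of "(y, t)"] that by (simp add: S_def mem_epigraph inner_prod_def)
  qed
qed

lemma convex_lipschitz_subgradient:
  fixes f :: "'a::euclidean_space \<Rightarrow> real"
  assumes cvx: "convex_on UNIV f" and lip: "C-lipschitz_on UNIV f"
  obtains g where "norm g \<le> C" and "\<And>y. f x + g \<bullet> (y - x) \<le> f y"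
proof -
  obtain a b where "(a, b) \<noteq> 0" and support: "\<And>y t. f y \<le> t \<Longrightarrow> a \<bullet> x + b * f x \<le> a \<bullet> y + b * t"
    using convex_on_supporting_hyperplane[OF cvx lipschitz_on_continuous_on[OF lip]] by blast
  have "b > 0"
  proof (rule ccontr)
    assume "\<not> b > 0"
    moreover have "b \<ge> 0" using support[of x "f x + 1"] by (simp add: algebra_simps)
    ultimately have "b = 0" and "a \<noteq> 0" using \<open>(a, b) \<noteq> 0\<close> by (auto simp: zero_prod_def)
    moreover have "a \<bullet> a \<le> 0" using support[of "x - a" "f (x - a)"] \<open>b = 0\<close> by (simp add: inner_diff_right)
    ultimately show False by (metis inner_gt_zero_iff not_le)
  qed
  define g where "g = - (1 / b) *\<^sub>R a"
  have sub: "f x + g \<bullet> (y - x) \<le> f y" for y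
  proof -
    have "b * (f x + g \<bullet> (y - x)) \<le> b * f y"
      using support[of y "f y"] \<open>b > 0\<close> by (simp add: g_def inner_diff_right algebra_simps)
    then show ?thesis using \<open>b > 0\<close> by simp
  qed
  have "norm g * norm g \<le> C * norm g"
    using sub[of "x + g"] lipschitz_onD[OF lip, of "x + g" x]
    by (simp add: dist_norm power2_norm_eq_inner[symmetric] power2_eq_square)
  then have "norm g \<le> C"
    using lipschitz_on_nonneg[OF lip] by (cases "norm g = 0") auto
  with sub show thesis using that by blast
qed

lemma C1_diff_le: "f \<in> C1 \<Longrightarrow> f x - f y \<le> norm (x - y)"
  using lipschitz_onD[of 1 UNIV f x y] by (auto simp: C1_def dist_norm dist_real_def)

lemma C1_borel_measurable: "f \<in> C1 \<Longrightarrow> f \<in> borel_measurable borel"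
  by (auto simp: C1_def intro: borel_measurable_continuous_onI lipschitz_on_continuous_on)

lemma C1_integrable:
  assumes "f \<in> C1" and "sets M = sets borel" and "finite_measure M" and "integrable M norm"
  shows "integrable M f"
proof (rule Bochner_Integration.integrable_bound)
  show "integrable M (\<lambda>x. \<bar>f 0\<bar> + norm x)"
    using assms(3,4) by (simp add: finite_measure.integrable_const)
  show "f \<in> borel_measurable M"
    using C1_borel_measurable[OF assms(1)] measurable_cong_sets[OF assms(2) refl] by blast
  show "AE x in M. norm (f x) \<le> norm (\<bar>f 0\<bar> + norm x)"
  proof (rule AE_I2)
    fix x
    show "norm (f x) \<le> norm (\<bar>f 0\<bar> + norm x)"
      using C1_diff_le[OF assms(1), of x 0] C1_diff_le[OF assms(1), of 0 x] by auto
  qed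
qed

lemma Max_affine_in_C1:
  fixes s :: "'k \<Rightarrow> 'a::euclidean_space"
  assumes "finite K" "K \<noteq> {}" and "\<And>k. k \<in> K \<Longrightarrow> norm (s k) \<le> 1"
  shows "(\<lambda>y. Max ((\<lambda>k. s k \<bullet> y + c k) ` K)) \<in> C1"
proof -
  define F where "F y = Max ((\<lambda>k. s k \<bullet> y + c k) ` K)" for y
  have ge: "s k \<bullet> y + c k \<le> F y" if "k \<in> K" for k y
    unfolding F_def using assms(1) that by (intro Max_ge) auto
  have attained: "\<exists>k\<in>K. F y = s k \<bullet> y + c k" for y
  proof -
    have "F y \<in> (\<lambda>k. s k \<bullet> y + c k) ` K" unfolding F_def using assms(1,2) by (intro Max_in) auto
    then show ?thesis by auto
  qed
  have lip: "F x - F y \<le> norm (x - y)" for x y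
  proof -
    obtain k where k: "k \<in> K" "F x = s k \<bullet> x + c k" using attained by blast
    have "s k \<bullet> (x - y) \<le> norm (s k) * norm (x - y)" by (rule order_trans[OF _ norm_cauchy_schwarz]) simp
    also have "\<dots> \<le> norm (x - y)" using assms(3)[OF k(1)] by (simp add: mult_left_le_one_le)
    finally show ?thesis using k ge[OF k(1), of y] by (simp add: inner_diff_right)
  qed
  have "1-lipschitz_on UNIV F"
  proof (rule lipschitz_onI)
    fix x y
    show "dist (F x) (F y) \<le> 1 * dist x y"
      using lip[of x y] lip[of y x] by (simp add: dist_norm dist_real_def abs_le_iff norm_minus_commute)
  qed simp
  moreover have "convex_on UNIV F"
  proof (rule convex_onI)
    fix t :: real and x y :: 'a assume t: "0 < t" "t < 1"
    obtain k where k: "k \<in> K" "F ((1 - t) *\<^sub>R x + t *\<^sub>R y) = s k \<bullet> ((1 - t) *\<^sub>R x + t *\<^sub>R y) + c k"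
      using attained by blast
    have "s k \<bullet> ((1 - t) *\<^sub>R x + t *\<^sub>R y) + c k = (1 - t) * (s k \<bullet> x + c k) + t * (s k \<bullet> y + c k)"
      by (simp add: inner_add_right algebra_simps)
    also have "\<dots> \<le> (1 - t) * F x + t * F y"
      using t ge[OF k(1)] by (intro add_mono mult_left_mono) auto
    finally show "F ((1 - t) *\<^sub>R x + t *\<^sub>R y) \<le> (1 - t) * F x + t * F y" using k by simp
  qed simp
  ultimately show ?thesis by (simp add: C1_def F_def[abs_def])
qed

lemma AE_in_measure_support:
  fixes M :: "'a::{metric_space, second_countable_topology} measure"
  assumes "sets M = sets borel"
  shows "AE x in M. x \<in> measure_support M"
proof -
  define F where "F = {ball x e | x e. e > 0 \<and> emeasure M (ball x e) = 0}"
  obtain F' where F': "F' \<subseteq> F" "countable F'" "\<Union>F' = \<Union>F"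
    using Lindelof[of F] by (auto simp: F_def)
  have "(\<Union>B\<in>F'. B) \<in> null_sets M"
    using F' assms by (intro null_sets_UN') (auto simp: F_def null_sets_def)
  moreover have "{x \<in> space M. x \<notin> measure_support M} \<subseteq> (\<Union>B\<in>F'. B)"
    unfolding image_ident F'(3) by (force simp: measure_support_def F_def not_less)
  ultimately show ?thesis by (rule AE_I')
qed

lemma measure_support_subset_closed:
  fixes M :: "'a::metric_space measure"
  assumes "sets M = sets borel" and "closed C" and "AE x in M. x \<in> C"
  shows "measure_support M \<subseteq> C"
proof
  fix x assume x: "x \<in> measure_support M"
  show "x \<in> C"
  proof (rule ccontr)
    assume "x \<notin> C"
    then obtain e where "e > 0" "ball x e \<subseteq> - C"
      using assms(2) by (meson Compl_iff open_Compl open_contains_ball)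
    have "AE y in M. y \<notin> ball x e"
      using assms(3) by (rule eventually_mono) (use \<open>ball x e \<subseteq> - C\<close> in auto)
    then have "ball x e \<in> null_sets M" using assms(1) by (simp add: AE_iff_null_sets)
    then have "emeasure M (ball x e) = 0" by auto
    with x \<open>e > 0\<close> show False by (auto simp: measure_support_def)
  qed
qed

lemma prob_measuresD:
  assumes "M \<in> prob_measures"
  shows "prob_space M" "sets M = sets borel" "space M = UNIV"
  using assms by (auto simp: prob_measures_def dest: sets_eq_imp_space_eq)

lemma P1_prob_measures: "\<rho> \<in> P1 \<Longrightarrow> \<rho> \<in> prob_measures"
  by (simp add: P1_def)

lemma P1_AE_norm_le_1:
  assumes "\<rho> \<in> P1"
  shows "AE z in \<rho>. norm z \<le> 1"
proof -
  have "AE z in \<rho>. z \<in> measure_support \<rho>"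
    using assms by (intro AE_in_measure_support) (simp add: P1_def prob_measures_def)
  then show ?thesis by (rule eventually_mono) (use assms in \<open>auto simp: P1_def\<close>)
qed

lemma distr_in_P1:
  assumes "M \<in> prob_measures" and "G \<in> borel_measurable M" and "\<And>x. norm (G x) \<le> 1"
  shows "distr M borel G \<in> P1"
proof -
  have "distr M borel G \<in> prob_measures"
    using prob_space.prob_space_distr[OF prob_measuresD(1)[OF assms(1)] assms(2)]
    by (simp add: prob_measures_def)
  moreover have "AE z in distr M borel G. z \<in> cball 0 1"
    using assms(2,3) by (subst AE_distr_iff) auto
  ultimately show ?thesis
    using measure_support_subset_closed[of "distr M borel G" "cball 0 1"] by (simp add: P1_def)
qed

context
  fixes \<alpha> \<rho> :: "'a::euclidean_space measure" and \<pi> :: "('a \<times> 'a) measure"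
  assumes coupling: "\<pi> \<in> couplings \<alpha> \<rho>"
begin

lemma couplings_sets: "sets \<pi> = sets (borel \<Otimes>\<^sub>M borel)"
  using coupling by (simp add: couplings_def)

lemma couplings_prob_space: "prob_space \<pi>"
  using coupling by (simp add: couplings_def)

lemma couplings_measurable: "g \<in> borel_measurable (borel \<Otimes>\<^sub>M borel) \<Longrightarrow> g \<in> borel_measurable \<pi>"
  using measurable_cong_sets[OF couplings_sets refl] by blast

lemma couplings_integral_fst:
  fixes g :: "'a \<Rightarrow> real"
  assumes "g \<in> borel_measurable borel"
  shows "(\<integral>z. g (fst z) \<partial>\<pi>) = (\<integral>x. g x \<partial>\<alpha>)"
    and "integrable \<pi> (\<lambda>z. g (fst z)) \<longleftrightarrow> integrable \<alpha> g"
  using integral_distr[OF couplings_measurable[OF measurable_fst] assms]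
    integrable_distr_eq[OF couplings_measurable[OF measurable_fst] assms] coupling
  by (simp_all add: couplings_def)

lemma couplings_integral_snd:
  fixes g :: "'a \<Rightarrow> real"
  assumes "g \<in> borel_measurable borel"
  shows "(\<integral>z. g (snd z) \<partial>\<pi>) = (\<integral>x. g x \<partial>\<rho>)"
    and "integrable \<pi> (\<lambda>z. g (snd z)) \<longleftrightarrow> integrable \<rho> g"
  using integral_distr[OF couplings_measurable[OF measurable_snd] assms]
    integrable_distr_eq[OF couplings_measurable[OF measurable_snd] assms] coupling
  by (simp_all add: couplings_def)

lemma couplings_AE_snd:
  assumes "AE x in \<rho>. x \<in> Z" and "Z \<in> sets borel"
  shows "AE z in \<pi>. snd z \<in> Z"
proof -
  have "distr \<pi> borel snd = \<rho>" using coupling by (simp add: couplings_def)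
  then have "AE x in distr \<pi> borel snd. x \<in> Z" using assms(1) by (rule ssubst)
  then show ?thesis using AE_distr_iff[OF couplings_measurable[OF measurable_snd]] assms(2) by simp
qed

end

lemma pair_measure_in_couplings:
  assumes "\<alpha> \<in> prob_measures" and "\<rho> \<in> prob_measures"
  shows "\<alpha> \<Otimes>\<^sub>M \<rho> \<in> couplings \<alpha> \<rho>"
proof -
  note A = prob_measuresD[OF assms(1)] and R = prob_measuresD[OF assms(2)]
  interpret pair_prob_space \<alpha> \<rho>
    by (simp add: pair_prob_space_def pair_sigma_finite_def A(1) R(1) prob_space_imp_sigma_finite)
  have "distr (\<alpha> \<Otimes>\<^sub>M \<rho>) borel fst = distr (\<alpha> \<Otimes>\<^sub>M \<rho>) \<alpha> fst"
    using A(2) by (auto intro: distr_cong)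
  also have "\<dots> = \<alpha>" by (rule M2.distr_pair_fst)
  finally have fst: "distr (\<alpha> \<Otimes>\<^sub>M \<rho>) borel fst = \<alpha>" .
  have "distr (\<alpha> \<Otimes>\<^sub>M \<rho>) borel snd = distr (\<alpha> \<Otimes>\<^sub>M \<rho>) \<rho> snd"
    using R(2) by (auto intro: distr_cong)
  also have "\<dots> = distr (\<rho> \<Otimes>\<^sub>M \<alpha>) \<rho> fst"
    by (subst pair_sigma_finite.distr_pair_swap[of \<rho> \<alpha>])
       (auto simp: distr_distr comp_def case_prod_beta pair_sigma_finite_def A(1) R(1) prob_space_imp_sigma_finite
             intro!: distr_cong)
  also have "\<dots> = \<rho>" by (rule M1.distr_pair_fst)
  finally have snd: "distr (\<alpha> \<Otimes>\<^sub>M \<rho>) borel snd = \<rho>" .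
  have "sets (\<alpha> \<Otimes>\<^sub>M \<rho>) = sets (borel \<Otimes>\<^sub>M borel)"
    using A(2) R(2) by (intro sets_pair_measure_cong) auto
  then show ?thesis
    using fst snd prob_space_axioms by (simp add: couplings_def)
qed

lemma distr_graph_in_couplings:
  assumes "M \<in> prob_measures" and G: "G \<in> borel_measurable M"
  shows "distr M (borel \<Otimes>\<^sub>M borel) (\<lambda>x. (x, G x)) \<in> couplings M (distr M borel G)"
proof -
  note A = prob_measuresD[OF assms(1)]
  have graph: "(\<lambda>x. (x, G x)) \<in> measurable M (borel \<Otimes>\<^sub>M borel)"
    using A(2) G by (intro measurable_Pair) (auto intro: measurable_ident_sets)
  have "distr (distr M (borel \<Otimes>\<^sub>M borel) (\<lambda>x. (x, G x))) borel fst = distr M borel (\<lambda>x. x)"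
    by (subst distr_distr[OF measurable_fst graph]) (simp add: comp_def)
  also have "\<dots> = M" using A(2) by (simp add: distr_id2)
  finally show ?thesis
    using distr_distr[OF measurable_snd graph] prob_space.prob_space_distr[OF A(1) graph]
    by (simp add: couplings_def comp_def)
qed

lemma couplings_inner_bound:
  fixes \<alpha> \<rho> :: "'a::euclidean_space measure"
  assumes \<pi>: "\<pi> \<in> couplings \<alpha> \<rho>" and "\<rho> \<in> P1" and "integrable \<alpha> norm"
  shows "integrable \<pi> (\<lambda>z. fst z \<bullet> snd z)"
    and "\<bar>\<integral>z. fst z \<bullet> snd z \<partial>\<pi>\<bar> \<le> (\<integral>x. norm x \<partial>\<alpha>)"
proof -
  have "AE z in \<pi>. snd z \<in> cball 0 1"
    using P1_AE_norm_le_1[OF assms(2)] by (intro couplings_AE_snd[OF \<pi>]) auto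
  then have bound: "AE z in \<pi>. norm (fst z \<bullet> snd z) \<le> norm (fst z)"
  proof (rule eventually_mono)
    fix z :: "'a \<times> 'a" assume "snd z \<in> cball 0 1"
    then have "norm (fst z) * norm (snd z) \<le> norm (fst z)" by (simp add: mult_left_le)
    then show "norm (fst z \<bullet> snd z) \<le> norm (fst z)"
      using Cauchy_Schwarz_ineq2[of "fst z" "snd z"] by simp
  qed
  have int_norm: "integrable \<pi> (\<lambda>z. norm (fst z))"
    using couplings_integral_fst(2)[OF \<pi>, of norm] assms(3) by simp
  show int: "integrable \<pi> (\<lambda>z. fst z \<bullet> snd z)"
    using bound by (intro Bochner_Integration.integrable_bound[OF int_norm] couplings_measurable[OF \<pi>]) auto
  have "\<bar>\<integral>z. fst z \<bullet> snd z \<partial>\<pi>\<bar> \<le> (\<integral>z. \<bar>fst z \<bullet> snd z\<bar> \<partial>\<pi>)"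
    by (rule integral_abs_bound)
  also have "\<dots> \<le> (\<integral>z. norm (fst z) \<partial>\<pi>)"
    using bound by (intro integral_mono_AE int int_norm integrable_abs) auto
  also have "\<dots> = (\<integral>x. norm x \<partial>\<alpha>)" using couplings_integral_fst(1)[OF \<pi>, of norm] by simp
  finally show "\<bar>\<integral>z. fst z \<bullet> snd z \<partial>\<pi>\<bar> \<le> (\<integral>x. norm x \<partial>\<alpha>)" .
qed

context
  fixes \<alpha> \<rho> :: "'a::euclidean_space measure"
  assumes \<alpha>: "\<alpha> \<in> prob_measures" and \<rho>: "\<rho> \<in> P1" and int_norm: "integrable \<alpha> norm"
begin

lemma coupling_integral_le_Ccost:
  assumes "\<pi> \<in> couplings \<alpha> \<rho>"
  shows "(\<integral>z. fst z \<bullet> snd z \<partial>\<pi>) \<le> Ccost \<alpha> \<rho>"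
  unfolding Ccost_def
proof (rule cSUP_upper[OF assms])
  show "bdd_above ((\<lambda>\<pi>. \<integral>z. fst z \<bullet> snd z \<partial>\<pi>) ` couplings \<alpha> \<rho>)"
    using couplings_inner_bound(2)[OF _ \<rho> int_norm] by (intro bdd_aboveI[of _ "\<integral>x. norm x \<partial>\<alpha>"]) fastforce
qed

lemma Ccost_le:
  assumes "\<And>\<pi>. \<pi> \<in> couplings \<alpha> \<rho> \<Longrightarrow> (\<integral>z. fst z \<bullet> snd z \<partial>\<pi>) \<le> B"
  shows "Ccost \<alpha> \<rho> \<le> B"
  unfolding Ccost_def
  using pair_measure_in_couplings[OF \<alpha> P1_prob_measures[OF \<rho>]] assms by (intro cSUP_least) auto

lemma Ccost_le_potentials:
  assumes "\<phi> \<in> borel_measurable borel" "integrable \<alpha> \<phi>"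
    and "\<psi> \<in> borel_measurable borel" "integrable \<rho> \<psi>"
    and "Z \<in> sets borel" "AE z in \<rho>. z \<in> Z" and dominate: "\<And>y z. z \<in> Z \<Longrightarrow> y \<bullet> z \<le> \<phi> y + \<psi> z"
  shows "Ccost \<alpha> \<rho> \<le> (\<integral>y. \<phi> y \<partial>\<alpha>) + (\<integral>z. \<psi> z \<partial>\<rho>)"
proof (rule Ccost_le)
  fix \<pi> assume \<pi>: "\<pi> \<in> couplings \<alpha> \<rho>"
  have int_\<phi>: "integrable \<pi> (\<lambda>z. \<phi> (fst z))" and int_\<psi>: "integrable \<pi> (\<lambda>z. \<psi> (snd z))"
    using couplings_integral_fst(2)[OF \<pi> assms(1)] couplings_integral_snd(2)[OF \<pi> assms(3)] assms(2,4)
    by simp_all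
  have "AE z in \<pi>. snd z \<in> Z" by (rule couplings_AE_snd[OF \<pi> assms(6,5)])
  then have "(\<integral>z. fst z \<bullet> snd z \<partial>\<pi>) \<le> (\<integral>z. \<phi> (fst z) + \<psi> (snd z) \<partial>\<pi>)"
    using int_\<phi> int_\<psi> dominate
    by (intro integral_mono_AE couplings_inner_bound(1)[OF \<pi> \<rho> int_norm]) (auto elim!: eventually_mono)
  also have "\<dots> = (\<integral>y. \<phi> y \<partial>\<alpha>) + (\<integral>z. \<psi> z \<partial>\<rho>)"
    using int_\<phi> int_\<psi> couplings_integral_fst(1)[OF \<pi> assms(1)] couplings_integral_snd(1)[OF \<pi> assms(3)]
    by simp
  finally show "(\<integral>z. fst z \<bullet> snd z \<partial>\<pi>) \<le> (\<integral>y. \<phi> y \<partial>\<alpha>) + (\<integral>z. \<psi> z \<partial>\<rho>)" .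
qed

end

section \<open>Simple functions and quantization\<close>

lemma measurable_finite_range_comp:
  fixes T :: "'b \<Rightarrow> 'a::t1_space"
  assumes T: "T \<in> borel_measurable M" and "finite (range T)"
    and "\<And>j. (\<lambda>x. g j x) \<in> measurable M N"
  shows "(\<lambda>x. g (T x) x) \<in> measurable M N"
proof (rule measurable_compose_countable'[OF assms(3)])
  show "countable (range T)" using assms(2) by (rule countable_finite)
  have "T -` {a} \<inter> space M \<in> sets M" for a
    using measurable_sets[OF T, of "{a}"] by (simp add: vimage_def)
  then show "T \<in> measurable M (count_space (range T))"
    using \<open>countable (range T)\<close> by (auto simp: measurable_count_space_eq_countable)
qed

lemma integral_finite_range:
  fixes T :: "'b \<Rightarrow> 'a::t1_space" and g :: "'a \<Rightarrow> real"
  assumes T: "T \<in> borel_measurable M" and fin: "finite (range T)" and "finite_measure M"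
  shows "integrable M (\<lambda>x. g (T x))"
    and "(\<integral>x. g (T x) \<partial>M) = (\<Sum>j\<in>range T. g j * measure M (T -` {j} \<inter> space M))"
proof -
  interpret finite_measure M by fact
  have sets: "T -` {j} \<inter> space M \<in> sets M" for j
    using measurable_sets[OF T, of "{j}"] by (simp add: vimage_def)
  have simple: "g (T x) = (\<Sum>j\<in>range T. g j * indicator (T -` {j} \<inter> space M) x)" if "x \<in> space M" for x
  proof -
    have "(\<Sum>j\<in>range T. g j * indicator (T -` {j} \<inter> space M) x) = (\<Sum>j\<in>range T. if j = T x then g j else 0)"
      using that by (intro sum.cong) (auto simp: indicator_def)
    then show ?thesis using fin by (simp add: sum.delta')
  qed
  have int: "integrable M (\<lambda>x. \<Sum>j\<in>range T. g j * indicator (T -` {j} \<inter> space M) x)"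
    using sets by (intro Bochner_Integration.integrable_sum integrable_mult_right integrable_real_indicator)
      (auto simp: less_top[symmetric])
  then show "integrable M (\<lambda>x. g (T x))"
    using simple by (subst Bochner_Integration.integrable_cong[OF refl]) auto
  have "(\<integral>x. g (T x) \<partial>M) = (\<integral>x. (\<Sum>j\<in>range T. g j * indicator (T -` {j} \<inter> space M) x) \<partial>M)"
    using simple by (rule Bochner_Integration.integral_cong[OF refl])
  also have "\<dots> = (\<Sum>j\<in>range T. g j * measure M (T -` {j} \<inter> space M))"
    using sets by (subst Bochner_Integration.integral_sum)
      (auto intro!: integrable_mult_right integrable_real_indicator simp: less_top[symmetric])
  finally show "(\<integral>x. g (T x) \<partial>M) = (\<Sum>j\<in>range T. g j * measure M (T -` {j} \<inter> space M))" .
qed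

lemma sum_measure_Int_level_sets:
  fixes T :: "'a::euclidean_space \<Rightarrow> 'b::t1_space"
  assumes "finite_measure M" "sets M = sets borel" and "T \<in> borel_measurable borel" "finite (range T)"
    and "A \<in> sets borel"
  shows "(\<Sum>j\<in>range T. measure M (A \<inter> T -` {j})) = measure M A"
proof -
  have "measure M (\<Union>j\<in>range T. A \<inter> T -` {j}) = (\<Sum>j\<in>range T. measure M (A \<inter> T -` {j}))"
    using assms measurable_sets[OF assms(3) borel_closed[OF closed_singleton]]
    by (intro finite_measure.finite_measure_finite_Union) (auto simp: disjoint_family_on_def)
  moreover have "(\<Union>j\<in>range T. A \<inter> T -` {j}) = A" by auto
  ultimately show ?thesis by simp
qed

lemma borel_measurable_finite_support:
  fixes H :: "'a::t1_space \<Rightarrow> real"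
  assumes "finite W" and "\<And>z. z \<notin> W \<Longrightarrow> H z = 0"
  shows "H \<in> borel_measurable borel"
proof -
  have "H z = (\<Sum>w\<in>W. H w * indicator {w} z)" for z
    using assms by (cases "z \<in> W") (auto simp: indicator_def sum.delta' cong: sum.cong)
  then have "H = (\<lambda>z. \<Sum>w\<in>W. H w * indicator {w} z)" by blast
  also have "\<dots> \<in> borel_measurable borel" by measurable
  finally show ?thesis .
qed

definition grid_trunc :: "real \<Rightarrow> real \<Rightarrow> real" where
  "grid_trunc d t = sgn t * d * of_int \<lfloor>\<bar>t\<bar> / d\<rfloor>"

lemma grid_trunc_bounds:
  assumes "d > 0"
  shows "\<bar>grid_trunc d t\<bar> \<le> \<bar>t\<bar>" and "\<bar>t - grid_trunc d t\<bar> < d"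
proof -
  have "d * of_int \<lfloor>\<bar>t\<bar> / d\<rfloor> \<le> \<bar>t\<bar>" "\<bar>t\<bar> < d * of_int \<lfloor>\<bar>t\<bar> / d\<rfloor> + d"
    using mult_left_mono[OF of_int_floor_le[of "\<bar>t\<bar> / d"], of d] real_of_int_floor_add_one_gt[of "\<bar>t\<bar> / d"]
      assms by (simp_all add: field_simps)
  moreover have "0 \<le> d * of_int \<lfloor>\<bar>t\<bar> / d\<rfloor>" using assms by simp
  ultimately show "\<bar>grid_trunc d t\<bar> \<le> \<bar>t\<bar>" and "\<bar>t - grid_trunc d t\<bar> < d"
    by (auto simp: grid_trunc_def sgn_real_def abs_mult)
qed

text \<open>Each coordinate is rounded towards zero to the grid \<open>d\<int>\<close>, so the norm does not increase;
  points outside the ball of radius \<open>R\<close> are sent to \<open>0\<close>, so the range is finite.\<close>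
definition quantize :: "real \<Rightarrow> real \<Rightarrow> 'a::euclidean_space \<Rightarrow> 'a" where
  "quantize d R v = (if norm v \<le> R then (\<Sum>b\<in>Basis. grid_trunc d (v \<bullet> b) *\<^sub>R b) else 0)"

lemma quantize_inner_Basis:
  "b \<in> Basis \<Longrightarrow> norm v \<le> R \<Longrightarrow> quantize d R v \<bullet> b = grid_trunc d (v \<bullet> b)"
  by (simp add: quantize_def inner_sum_left inner_Basis if_distrib sum.delta cong: if_cong)

lemma norm_quantize_le:
  assumes "d > 0"
  shows "norm (quantize d R v) \<le> norm v"
proof (cases "norm v \<le> R")
  case True
  have "quantize d R v \<bullet> quantize d R v \<le> v \<bullet> v"
    unfolding euclidean_inner[of "quantize d R v" "quantize d R v"] euclidean_inner[of v v]
  proof (rule sum_mono)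
    fix b :: 'a assume "b \<in> Basis"
    then have "\<bar>quantize d R v \<bullet> b\<bar> \<le> \<bar>v \<bullet> b\<bar>"
      using True grid_trunc_bounds(1)[OF assms] by (simp add: quantize_inner_Basis)
    then have "\<bar>quantize d R v \<bullet> b\<bar> * \<bar>quantize d R v \<bullet> b\<bar> \<le> \<bar>v \<bullet> b\<bar> * \<bar>v \<bullet> b\<bar>"
      by (intro mult_mono) auto
    then show "(quantize d R v \<bullet> b) * (quantize d R v \<bullet> b) \<le> (v \<bullet> b) * (v \<bullet> b)"
      by (simp add: abs_mult[symmetric])
  qed
  then show ?thesis by (simp add: norm_eq_sqrt_inner)
qed (simp add: quantize_def)

lemma norm_diff_quantize_le:
  fixes v :: "'a::euclidean_space" and d :: real
  assumes "d > 0" and "norm v \<le> R"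
  shows "norm (v - quantize d R v) \<le> DIM('a) * d"
proof -
  have "norm (v - quantize d R v) \<le> (\<Sum>b\<in>Basis. \<bar>(v - quantize d R v) \<bullet> b\<bar>)" by (rule norm_le_l1)
  also have "\<dots> \<le> (\<Sum>b\<in>(Basis::'a set). d)"
    using grid_trunc_bounds(2)[OF assms(1)] assms(2)
    by (intro sum_mono) (simp add: inner_diff_left quantize_inner_Basis less_imp_le)
  finally show ?thesis by simp
qed

lemma finite_grid:
  assumes "finite F"
  shows "finite {w::'a::euclidean_space. \<forall>b\<in>Basis. w \<bullet> b \<in> F}"
proof (rule finite_subset)
  show "{w::'a. \<forall>b\<in>Basis. w \<bullet> b \<in> F} \<subseteq> (\<lambda>k. \<Sum>b\<in>Basis. k b *\<^sub>R b) ` (PiE Basis (\<lambda>_. F))"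
  proof
    fix w :: 'a assume "w \<in> {w. \<forall>b\<in>Basis. w \<bullet> b \<in> F}"
    then have "restrict (\<lambda>b. w \<bullet> b) Basis \<in> PiE Basis (\<lambda>_. F)" by auto
    moreover have "w = (\<Sum>b\<in>Basis. restrict (\<lambda>b. w \<bullet> b) Basis b *\<^sub>R b)"
      by (simp add: euclidean_representation)
    ultimately show "w \<in> (\<lambda>k. \<Sum>b\<in>Basis. k b *\<^sub>R b) ` (PiE Basis (\<lambda>_. F))" by blast
  qed
qed (intro finite_imageI finite_PiE assms finite_Basis)

lemma finite_range_quantize:
  assumes "d > 0"
  shows "finite (range (quantize d R :: 'a::euclidean_space \<Rightarrow> 'a))"
proof -
  define N where "N = \<lceil>R / d\<rceil>"
  define F where "F = (\<lambda>k. d * of_int k) ` {-N..N}"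
  have grid_in_F: "grid_trunc d t \<in> F" if "\<bar>t\<bar> \<le> R" for t
  proof -
    define k where "k = \<lfloor>\<bar>t\<bar> / d\<rfloor>"
    define s :: int where "s = (if t > 0 then 1 else if t = 0 then 0 else -1)"
    have "of_int k \<le> \<bar>t\<bar> / d" by (simp add: k_def)
    also have "\<dots> \<le> R / d" using that assms by (simp add: divide_right_mono)
    also have "\<dots> \<le> of_int N" by (simp add: N_def)
    finally have "k \<le> N" by linarith
    moreover have "0 \<le> k" using assms by (simp add: k_def)
    ultimately have "s * k \<in> {-N..N}" by (auto simp: s_def)
    moreover have "grid_trunc d t = d * of_int (s * k)"
      by (simp add: grid_trunc_def s_def k_def sgn_real_def)
    ultimately show ?thesis unfolding F_def by (rule rev_image_eqI)
  qed
  then have "quantize d R v \<in> insert 0 {w. \<forall>b\<in>Basis. w \<bullet> b \<in> F}" for v :: 'a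
  proof (cases "norm v \<le> R")
    case True
    then have "\<bar>v \<bullet> b\<bar> \<le> R" if "b \<in> Basis" for b using Basis_le_norm[OF that, of v] by linarith
    with True show ?thesis by (simp add: quantize_inner_Basis grid_in_F)
  qed (simp add: quantize_def)
  then have "range (quantize d R :: 'a \<Rightarrow> 'a) \<subseteq> insert 0 {w. \<forall>b\<in>Basis. w \<bullet> b \<in> F}"
    by blast
  moreover have "finite (insert 0 {w::'a. \<forall>b\<in>Basis. w \<bullet> b \<in> F})"
    using finite_grid[of F] by (simp add: F_def)
  ultimately show ?thesis by (rule finite_subset)
qed

lemma quantize_borel_measurable: "quantize d R \<in> borel_measurable borel"
  unfolding quantize_def grid_trunc_def by measurable

lemma quantize_error_bound: "d > 0 \<Longrightarrow> norm (x - quantize d R x) \<le> 2 * norm x"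
  using norm_triangle_ineq4[of x "quantize d R x"] norm_quantize_le[of d R x] by linarith

lemma quantize_error_borel_measurable:
  "(\<lambda>x::'a::euclidean_space. norm (x - quantize d R x)) \<in> borel_measurable borel"
  using quantize_borel_measurable by measurable

lemma integrable_quantize_error:
  fixes M :: "'a::euclidean_space measure"
  assumes "sets M = sets borel" and "integrable M norm" and "d > 0"
  shows "integrable M (\<lambda>x. norm (x - quantize d R x))"
proof (rule Bochner_Integration.integrable_bound)
  show "integrable M (\<lambda>x. 2 * norm x)" using assms(2) by simp
  show "(\<lambda>x. norm (x - quantize d R x)) \<in> borel_measurable M"
    using quantize_error_borel_measurable measurable_cong_sets[OF assms(1) refl] by blast
  show "AE x in M. norm (norm (x - quantize d R x)) \<le> norm (2 * norm x)"
    using quantize_error_bound[OF assms(3)] by (intro AE_I2) simp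
qed

lemma quantize_error_small:
  fixes M :: "'a::euclidean_space measure"
  assumes "sets M = sets borel" and "integrable M norm" and "e > 0"
  obtains d R where "d > 0" and "(\<integral>x. norm (x - quantize d R x) \<partial>M) \<le> e"
proof -
  define s where "s n = (\<lambda>x::'a. norm (x - quantize (1 / Suc n) (Suc n) x))" for n
  have "(\<lambda>n. integral\<^sup>L M (s n)) \<longlonglongrightarrow> integral\<^sup>L M (\<lambda>x. 0)"
  proof (rule integral_dominated_convergence)
    show "integrable M (\<lambda>x. 2 * norm x)" using assms(2) by simp
    show "s n \<in> borel_measurable M" for n
      using quantize_error_borel_measurable measurable_cong_sets[OF assms(1) refl] unfolding s_def by blast
    show "AE x in M. norm (s n x) \<le> 2 * norm x" for n
      using quantize_error_bound[of "1 / Suc n"] by (intro AE_I2) (simp add: s_def)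
    show "AE x in M. (\<lambda>n. s n x) \<longlonglongrightarrow> 0"
    proof (rule AE_I2)
      fix x :: 'a
      obtain N :: nat where "norm x \<le> N" using real_arch_simple by blast
      then have "\<forall>n\<ge>N. s n x \<le> DIM('a) / Suc n"
        using norm_diff_quantize_le[of "1 / Suc n" x "Suc n" for n] by (simp add: s_def)
      then show "(\<lambda>n. s n x) \<longlonglongrightarrow> 0"
        by (intro tendsto_sandwich[OF _ _ tendsto_const LIMSEQ_Suc[OF lim_const_over_n]])
          (auto simp: s_def eventually_sequentially)
    qed
  qed simp
  then have "\<forall>\<^sub>F n in sequentially. integral\<^sup>L M (s n) < e"
    using assms(3) by (intro order_tendstoD(2)) simp_all
  then obtain n where "integral\<^sup>L M (s n) < e" by (auto simp: eventually_sequentially)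
  then show thesis by (intro that[of "1 / Suc n" "Suc n"]) (auto simp: s_def)
qed

section \<open>From convex functions to measures\<close>

text \<open>If each \<open>a j\<close> is a subgradient of \<open>f\<close> at \<open>j\<close>, this is the convex conjugate of \<open>f\<close> on the
  finitely many slopes \<open>a ` X\<close>.\<close>
definition slope_conjugate :: "('a::real_inner \<Rightarrow> real) \<Rightarrow> ('a \<Rightarrow> 'a) \<Rightarrow> 'a set \<Rightarrow> 'a \<Rightarrow> real" where
  "slope_conjugate f a X z = (if z \<in> a ` X then Min ((\<lambda>j. a j \<bullet> j - f j) ` {j \<in> X. a j = z}) else 0)"

context
  fixes f :: "'a::euclidean_space \<Rightarrow> real" and a :: "'a \<Rightarrow> 'a" and X :: "'a set"
  assumes X: "finite X" and subgradient: "\<And>j y. f j + a j \<bullet> (y - j) \<le> f y"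
begin

lemma inner_le_slope_conjugate: "z \<in> a ` X \<Longrightarrow> y \<bullet> z \<le> f y + slope_conjugate f a X z"
proof -
  assume "z \<in> a ` X"
  then have "slope_conjugate f a X z \<in> (\<lambda>j. a j \<bullet> j - f j) ` {j \<in> X. a j = z}"
    unfolding slope_conjugate_def using X by (auto intro!: Min_in)
  then obtain j where "a j = z" "slope_conjugate f a X z = a j \<bullet> j - f j" by auto
  then show ?thesis using subgradient[of j y] by (simp add: inner_diff_right inner_commute)
qed

lemma slope_conjugate_le: "j \<in> X \<Longrightarrow> slope_conjugate f a X (a j) \<le> a j \<bullet> j - f j"
  unfolding slope_conjugate_def using X by (auto intro!: Min_le)

lemma slope_conjugate_borel_measurable: "slope_conjugate f a X \<in> borel_measurable borel"
  using X by (intro borel_measurable_finite_support[of "a ` X"]) (auto simp: slope_conjugate_def)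

end

lemma integrable_inner_bounded:
  fixes M :: "'a::euclidean_space measure"
  assumes "M \<in> prob_measures" "integrable M norm" "G \<in> borel_measurable M" "\<And>x. norm (G x) \<le> 1"
  shows "integrable M (\<lambda>x. x \<bullet> G x)"
proof (rule Bochner_Integration.integrable_bound[OF assms(2)])
  show "(\<lambda>x. x \<bullet> G x) \<in> borel_measurable M"
    using prob_measuresD(2)[OF assms(1)] assms(3) by (intro borel_measurable_inner) (auto intro: measurable_ident_sets)
  show "AE x in M. norm (x \<bullet> G x) \<le> norm (norm x)"
  proof (rule AE_I2)
    fix x
    have "\<bar>x \<bullet> G x\<bar> \<le> norm x * norm (G x)" by (rule Cauchy_Schwarz_ineq2)
    also have "\<dots> \<le> norm x" using assms(4) by (simp add: mult_left_le)
    finally show "norm (x \<bullet> G x) \<le> norm (norm x)" by simp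
  qed
qed

lemma integral_graph_le_Ccost:
  fixes M :: "'a::euclidean_space measure"
  assumes M: "M \<in> prob_measures" "integrable M norm" and G: "G \<in> borel_measurable M" "\<And>x. norm (G x) \<le> 1"
  shows "(\<integral>x. x \<bullet> G x \<partial>M) \<le> Ccost M (distr M borel G)"
proof -
  have "(\<integral>z. fst z \<bullet> snd z \<partial>distr M (borel \<Otimes>\<^sub>M borel) (\<lambda>x. (x, G x))) \<le> Ccost M (distr M borel G)"
    by (intro coupling_integral_le_Ccost[OF M(1) distr_in_P1[OF M(1) G] M(2)] distr_graph_in_couplings[OF M(1) G(1)])
  then show ?thesis
    using G(1) prob_measuresD(2)[OF M(1)]
    by (subst (asm) integral_distr) (auto intro: measurable_Pair measurable_ident_sets)
qed

text \<open>Pushing \<open>\<mu>\<close> forward along a finitely-valued selection of subgradients \<open>a \<circ> T\<close> of \<open>f\<close> gives a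
  measure \<open>\<rho>\<close> for which the graph of \<open>a \<circ> T\<close> is a nearly optimal coupling of \<open>(\<mu>, \<rho>)\<close>, while the
  Fenchel--Young inequality for \<open>f\<close> bounds every coupling of \<open>(\<nu>, \<rho>)\<close>.\<close>
lemma Ccost_gap_le_subgradient_transport:
  fixes \<mu> \<nu> :: "'a::euclidean_space measure" and T a :: "'a \<Rightarrow> 'a"
  assumes \<mu>: "\<mu> \<in> prob_measures" "integrable \<mu> norm" and \<nu>: "\<nu> \<in> prob_measures" "integrable \<nu> norm"
    and f: "f \<in> C1"
    and T: "T \<in> borel_measurable borel" "finite (range T)" "integrable \<mu> (\<lambda>x. norm (x - T x))"
    and a: "\<And>j. norm (a j) \<le> 1" "\<And>j y. f j + a j \<bullet> (y - j) \<le> f y"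
  defines "\<rho> \<equiv> distr \<mu> borel (\<lambda>x. a (T x))"
  shows "\<rho> \<in> P1"
    and "Ccost \<nu> \<rho> - Ccost \<mu> \<rho> \<le> (\<integral>x. f x \<partial>\<nu>) - (\<integral>x. f x \<partial>\<mu>) + 2 * (\<integral>x. norm (x - T x) \<partial>\<mu>)"
proof -
  note M = prob_measuresD[OF \<mu>(1)] and N = prob_measuresD[OF \<nu>(1)]
  interpret \<mu>: prob_space \<mu> by (rule M(1))
  interpret \<nu>: prob_space \<nu> by (rule N(1))
  define G where "G = (\<lambda>x. a (T x))"
  define H where "H = slope_conjugate f a (range T)"
  have \<rho>_G: "\<rho> = distr \<mu> borel G" by (simp add: \<rho>_def G_def)
  have T_\<mu>: "T \<in> borel_measurable \<mu>" using T(1) measurable_cong_sets[OF M(2) refl] by blast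
  have G: "G \<in> borel_measurable \<mu>"
    unfolding G_def by (rule measurable_finite_range_comp[OF T_\<mu> T(2)]) simp
  show \<rho>: "\<rho> \<in> P1" unfolding \<rho>_G by (rule distr_in_P1[OF \<mu>(1) G]) (simp add: G_def a)
  note H_facts = inner_le_slope_conjugate[OF T(2) a(2)] slope_conjugate_le[OF T(2) a(2)]
    slope_conjugate_borel_measurable[OF T(2) a(2)]
  have H: "H \<in> borel_measurable borel" by (simp add: H_def H_facts(3))
  have int_HG: "integrable \<mu> (\<lambda>x. H (G x))"
    unfolding G_def by (rule integral_finite_range(1)[OF T_\<mu> T(2) \<mu>.finite_measure_axioms])
  have int_xG: "integrable \<mu> (\<lambda>x. x \<bullet> G x)"
    by (rule integrable_inner_bounded[OF \<mu> G]) (simp add: G_def a)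
  have int_f: "integrable \<mu> f" "integrable \<nu> f"
    using C1_integrable[OF f M(2) \<mu>.finite_measure_axioms \<mu>(2)]
      C1_integrable[OF f N(2) \<nu>.finite_measure_axioms \<nu>(2)] by auto
  have "Ccost \<nu> \<rho> \<le> (\<integral>y. f y \<partial>\<nu>) + (\<integral>z. H z \<partial>\<rho>)"
  proof (rule Ccost_le_potentials[OF \<nu>(1) \<rho> \<nu>(2) C1_borel_measurable[OF f] int_f(2) H])
    show "integrable \<rho> H" unfolding \<rho>_G using integrable_distr_eq[OF G H] int_HG by simp
    show "AE z in \<rho>. z \<in> a ` range T"
      unfolding \<rho>_G using G T(2) by (subst AE_distr_iff) (auto simp: G_def finite_imp_closed)
  qed (use T(2) H_facts(1) in \<open>auto simp: H_def finite_imp_closed\<close>)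
  also have "(\<integral>z. H z \<partial>\<rho>) = (\<integral>x. H (G x) \<partial>\<mu>)"
    unfolding \<rho>_G by (rule integral_distr[OF G H])
  finally have upper: "Ccost \<nu> \<rho> \<le> (\<integral>y. f y \<partial>\<nu>) + (\<integral>x. H (G x) \<partial>\<mu>)" .
  have lower: "(\<integral>x. x \<bullet> G x \<partial>\<mu>) \<le> Ccost \<mu> \<rho>"
    unfolding \<rho>_G by (rule integral_graph_le_Ccost[OF \<mu> G]) (simp add: G_def a)
  have "H (G x) - x \<bullet> G x \<le> 2 * norm (x - T x) - f x" for x
  proof -
    have "G x \<bullet> (T x - x) \<le> norm (G x) * norm (T x - x)" by (rule order_trans[OF _ norm_cauchy_schwarz]) simp
    also have "\<dots> \<le> norm (x - T x)" using a(1) by (simp add: G_def mult_left_le_one_le norm_minus_commute)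
    finally show ?thesis
      using H_facts(2)[of "T x"] C1_diff_le[OF f, of x "T x"]
      by (simp add: H_def G_def inner_diff_right inner_commute)
  qed
  then have "(\<integral>x. H (G x) - x \<bullet> G x \<partial>\<mu>) \<le> (\<integral>x. 2 * norm (x - T x) - f x \<partial>\<mu>)"
    using int_HG int_xG T(3) int_f(1) by (intro integral_mono) auto
  then show "Ccost \<nu> \<rho> - Ccost \<mu> \<rho> \<le> (\<integral>x. f x \<partial>\<nu>) - (\<integral>x. f x \<partial>\<mu>) + 2 * (\<integral>x. norm (x - T x) \<partial>\<mu>)"
    using upper lower int_HG int_xG T(3) int_f(1) by simp
qed

lemma exists_P1_Ccost_gap_le_C1_gap:
  fixes \<mu> \<nu> :: "'a::euclidean_space measure"
  assumes \<mu>: "\<mu> \<in> prob_measures" "integrable \<mu> norm" and \<nu>: "\<nu> \<in> prob_measures" "integrable \<nu> norm"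
    and f: "f \<in> C1" and "e > 0"
  shows "\<exists>\<rho>\<in>P1. Ccost \<nu> \<rho> - Ccost \<mu> \<rho> \<le> (\<integral>x. f x \<partial>\<nu>) - (\<integral>x. f x \<partial>\<mu>) + e"
proof -
  note M = prob_measuresD[OF \<mu>(1)]
  obtain d R where d: "d > 0" and small: "(\<integral>x. norm (x - quantize d R x) \<partial>\<mu>) \<le> e / 2"
    using quantize_error_small[OF M(2) \<mu>(2), of "e / 2"] \<open>e > 0\<close> by auto
  have "\<exists>g. norm g \<le> 1 \<and> (\<forall>y. f j + g \<bullet> (y - j) \<le> f y)" for j
    using f convex_lipschitz_subgradient[of f 1 j] by (auto simp: C1_def)
  then obtain a where "\<And>j. norm (a j) \<le> 1" "\<And>j y. f j + a j \<bullet> (y - j) \<le> f y" by metis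
  note transport = Ccost_gap_le_subgradient_transport[OF \<mu> \<nu> f quantize_borel_measurable[of d R]
      finite_range_quantize[OF d] integrable_quantize_error[OF M(2) \<mu>(2) d] this]
  show ?thesis using transport small by (intro bexI[OF _ transport(1)]) linarith
qed

section \<open>Discrete optimal transport\<close>

definition transport_plans :: "'a set \<Rightarrow> 'b set \<Rightarrow> ('a \<Rightarrow> real) \<Rightarrow> ('b \<Rightarrow> real) \<Rightarrow> ('a \<times> 'b \<Rightarrow> real) set" where
  "transport_plans J I \<alpha> \<beta> = {p. (\<forall>x. x \<notin> J \<times> I \<longrightarrow> p x = 0) \<and> (\<forall>x. 0 \<le> p x)
      \<and> (\<forall>j\<in>J. (\<Sum>i\<in>I. p (j, i)) = \<alpha> j) \<and> (\<forall>i\<in>I. (\<Sum>j\<in>J. p (j, i)) = \<beta> i)}"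

definition plan_value :: "('a \<Rightarrow> 'b \<Rightarrow> real) \<Rightarrow> 'a set \<Rightarrow> 'b set \<Rightarrow> ('a \<times> 'b \<Rightarrow> real) \<Rightarrow> real" where
  "plan_value c J I p = (\<Sum>(j, i)\<in>J \<times> I. p (j, i) * c j i)"

lemma transport_plansD:
  assumes "p \<in> transport_plans J I \<alpha> \<beta>"
  shows "\<And>x. x \<notin> J \<times> I \<Longrightarrow> p x = 0" and "\<And>x. 0 \<le> p x"
    and "\<And>j. j \<in> J \<Longrightarrow> (\<Sum>i\<in>I. p (j, i)) = \<alpha> j" and "\<And>i. i \<in> I \<Longrightarrow> (\<Sum>j\<in>J. p (j, i)) = \<beta> i"
  using assms by (auto simp: transport_plans_def)

lemma transport_plans_le_marginals:
  assumes "p \<in> transport_plans J I \<alpha> \<beta>" and "finite J" "finite I" and "j \<in> J" "i \<in> I"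
  shows "p (j, i) \<le> \<alpha> j" and "p (j, i) \<le> \<beta> i"
proof -
  have "p (j, i) \<le> (\<Sum>i'\<in>I. p (j, i'))" "p (j, i) \<le> (\<Sum>j'\<in>J. p (j', i))"
    using assms transport_plansD(2)[OF assms(1)] by (auto intro: member_le_sum)
  then show "p (j, i) \<le> \<alpha> j" and "p (j, i) \<le> \<beta> i"
    using transport_plansD(3,4)[OF assms(1)] assms(4,5) by auto
qed

lemma product_plan_in_transport_plans:
  assumes "\<And>j. 0 \<le> \<alpha> j" "\<And>i. 0 \<le> \<beta> i" and "sum \<alpha> J = 1" "sum \<beta> I = 1"
  shows "(\<lambda>(j, i). if (j, i) \<in> J \<times> I then \<alpha> j * \<beta> i else 0) \<in> transport_plans J I \<alpha> \<beta>"
proof -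
  have "(\<Sum>i\<in>I. if (j, i) \<in> J \<times> I then \<alpha> j * \<beta> i else 0) = \<alpha> j" if "j \<in> J" for j
    using that assms(4) by (simp add: sum_distrib_left[symmetric])
  moreover have "(\<Sum>j\<in>J. if (j, i) \<in> J \<times> I then \<alpha> j * \<beta> i else 0) = \<beta> i" if "i \<in> I" for i
    using that assms(3) by (simp add: sum_distrib_right[symmetric])
  ultimately show ?thesis using assms(1,2) by (auto simp: transport_plans_def)
qed

lemma optimal_plan_exists:
  assumes "finite J" "finite I" and "transport_plans J I \<alpha> \<beta> \<noteq> {}"
  obtains p where "p \<in> transport_plans J I \<alpha> \<beta>"
    and "\<And>q. q \<in> transport_plans J I \<alpha> \<beta> \<Longrightarrow> plan_value c J I q \<le> plan_value c J I p"
proof -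
  define P where "P = transport_plans J I \<alpha> \<beta>"
  define B where "B = (\<Pi>\<^sub>E x\<in>UNIV. if x \<in> J \<times> I then {0..\<alpha> (fst x)} else {0::real})"
  have coord: "continuous_on UNIV (\<lambda>p::'a \<times> 'b \<Rightarrow> real. p x)" for x
    by (rule continuous_on_product_coordinates)
  have "compact B"
    using compactin_PiE[of "\<lambda>_. euclidean" UNIV "\<lambda>x. if x \<in> J \<times> I then {0..\<alpha> (fst x)} else {0::real}"]
    by (simp add: B_def euclidean_product_topology)
  moreover have "P \<subseteq> B"
  proof
    fix p assume p: "p \<in> P"
    have "p x \<in> (if x \<in> J \<times> I then {0..\<alpha> (fst x)} else {0})" for x
      using p transport_plansD(1,2)[of p J I \<alpha> \<beta> x] transport_plans_le_marginals(1)[OF _ assms(1,2), of p \<alpha> \<beta> "fst x" "snd x"]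
      by (cases x) (auto simp: P_def)
    then show "p \<in> B" by (simp add: B_def PiE_UNIV_domain)
  qed
  moreover have "closed P"
  proof -
    have "P = (\<Inter>x\<in>-(J \<times> I). {p. p x = 0}) \<inter> (\<Inter>x. {p. 0 \<le> p x})
        \<inter> (\<Inter>j\<in>J. {p. (\<Sum>i\<in>I. p (j, i)) = \<alpha> j}) \<inter> (\<Inter>i\<in>I. {p. (\<Sum>j\<in>J. p (j, i)) = \<beta> i})"
      by (auto simp: P_def transport_plans_def)
    then show ?thesis
      by (simp only:) (intro closed_Int closed_INT ballI closed_Collect_eq closed_Collect_le
          continuous_on_sum coord continuous_on_const)
  qed
  ultimately have "compact P" using closed_Int_compact[of P B] by (simp add: Int_absorb2)
  moreover have "continuous_on P (plan_value c J I)"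
    unfolding plan_value_def case_prod_beta
    by (intro continuous_on_sum continuous_on_mult_right continuous_on_subset[OF coord]) auto
  ultimately show thesis
    using continuous_attains_sup[of P "plan_value c J I"] assms(3) that by (auto simp: P_def)
qed

definition cyclically_monotone :: "('a \<Rightarrow> 'b \<Rightarrow> real) \<Rightarrow> ('a \<times> 'b) set \<Rightarrow> bool" where
  "cyclically_monotone c \<Gamma> \<longleftrightarrow> (\<forall>k js cs. (\<forall>l<k. (js l, cs l) \<in> \<Gamma>) \<longrightarrow>
      (\<Sum>l<k. c (js l) (cs (Suc l mod k)) - c (js l) (cs l)) \<le> 0)"

lemma sum_of_bool_points:
  fixes g :: "'a \<Rightarrow> real"
  assumes "finite A" and "\<And>l. l < k \<Longrightarrow> u l \<in> A"
  shows "(\<Sum>x\<in>A. (\<Sum>l<k. of_bool (x = u l)) * g x) = (\<Sum>l<k. g (u l))"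
proof -
  have "(\<Sum>x\<in>A. (\<Sum>l<k. of_bool (x = u l)) * g x) = (\<Sum>l<k. \<Sum>x\<in>A. of_bool (x = u l) * g x)"
    by (simp add: sum_distrib_right sum.swap[of _ A])
  also have "\<dots> = (\<Sum>l<k. \<Sum>x\<in>A. if x = u l then g (u l) else 0)"
    by (intro sum.cong) auto
  finally show ?thesis using assms by (simp add: sum.delta')
qed

lemma sum_lessThan_Suc_mod: "(\<Sum>l<k. g (Suc l mod k)) = (\<Sum>l<k. g l)"
proof -
  have "bij_betw (\<lambda>l. Suc l mod k) {..<k} {..<k}"
    by (rule bij_betw_byWitness[where f'="\<lambda>l. if l = 0 then k - 1 else l - 1"]) (auto simp: mod_Suc)
  then show ?thesis by (rule sum.reindex_bij_betw)
qed

lemma sum_of_bool_Pair_fst: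
  assumes "finite I" "\<And>l. l < k \<Longrightarrow> v l \<in> I"
  shows "(\<Sum>i\<in>I. \<Sum>l<k. of_bool ((j, i) = (u l, v l)) :: real) = (\<Sum>l<k. of_bool (j = u l))"
proof (subst sum.swap, intro sum.cong refl)
  fix l assume "l \<in> {..<k}"
  have "(\<Sum>i\<in>I. of_bool ((j, i) = (u l, v l)) :: real) = (\<Sum>i\<in>I. if i = v l then of_bool (j = u l) else 0)"
    by (intro sum.cong) auto
  then show "(\<Sum>i\<in>I. of_bool ((j, i) = (u l, v l)) :: real) = of_bool (j = u l)"
    using assms \<open>l \<in> {..<k}\<close> by (simp add: sum.delta')
qed

lemma sum_of_bool_Pair_snd:
  assumes "finite J" "\<And>l. l < k \<Longrightarrow> u l \<in> J"
  shows "(\<Sum>j\<in>J. \<Sum>l<k. of_bool ((j, i) = (u l, v l)) :: real) = (\<Sum>l<k. of_bool (i = v l))"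
proof (subst sum.swap, intro sum.cong refl)
  fix l assume "l \<in> {..<k}"
  have "(\<Sum>j\<in>J. of_bool ((j, i) = (u l, v l)) :: real) = (\<Sum>j\<in>J. if j = u l then of_bool (i = v l) else 0)"
    by (intro sum.cong) auto
  then show "(\<Sum>j\<in>J. of_bool ((j, i) = (u l, v l)) :: real) = of_bool (i = v l)"
    using assms \<open>l \<in> {..<k}\<close> by (simp add: sum.delta')
qed

definition cycle_shift :: "nat \<Rightarrow> (nat \<Rightarrow> 'a) \<Rightarrow> (nat \<Rightarrow> 'b) \<Rightarrow> 'a \<times> 'b \<Rightarrow> real" where
  "cycle_shift k js cs x = (\<Sum>l<k. of_bool (x = (js l, cs (Suc l mod k)))) - (\<Sum>l<k. of_bool (x = (js l, cs l)))"

context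
  fixes k :: nat and js :: "nat \<Rightarrow> 'a" and cs :: "nat \<Rightarrow> 'b" and J :: "'a set" and I :: "'b set"
  assumes J: "finite J" and I: "finite I" and cycle: "\<And>l. l < k \<Longrightarrow> js l \<in> J \<and> cs l \<in> I"
begin

lemma cycle_shift_outside:
  assumes "x \<notin> J \<times> I"
  shows "cycle_shift k js cs x = 0"
proof -
  have "(\<Sum>l<k. of_bool (x = (js l, cs (Suc l mod k))) :: real) = 0" "(\<Sum>l<k. of_bool (x = (js l, cs l)) :: real) = 0"
    using assms cycle cycle[OF mod_less_divisor] by (auto intro!: sum.neutral)
  then show ?thesis by (simp only: cycle_shift_def)
qed

lemma cycle_shift_lower_bound:
  shows "- real k \<le> cycle_shift k js cs x"
    and "\<forall>l<k. x \<noteq> (js l, cs l) \<Longrightarrow> 0 \<le> cycle_shift k js cs x"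
proof -
  have "(\<Sum>l<k. of_bool (x = (js l, cs l)) :: real) \<le> k"
    using sum_bounded_above[of "{..<k}" "\<lambda>l. of_bool (x = (js l, cs l)) :: real" 1] by simp
  moreover have shifted: "0 \<le> (\<Sum>l<k. of_bool (x = (js l, cs (Suc l mod k))) :: real)"
    by (rule sum_nonneg) simp
  ultimately show "- real k \<le> cycle_shift k js cs x" unfolding cycle_shift_def by linarith
  assume "\<forall>l<k. x \<noteq> (js l, cs l)"
  then have "(\<Sum>l<k. of_bool (x = (js l, cs l)) :: real) = 0" by (auto intro!: sum.neutral)
  with shifted show "0 \<le> cycle_shift k js cs x" unfolding cycle_shift_def by linarith
qed

lemma cycle_shift_row_sum: "(\<Sum>i\<in>I. cycle_shift k js cs (j, i)) = 0"
proof -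
  have "(\<Sum>i\<in>I. cycle_shift k js cs (j, i)) = (\<Sum>i\<in>I. \<Sum>l<k. of_bool ((j, i) = (js l, cs (Suc l mod k))))
      - (\<Sum>i\<in>I. \<Sum>l<k. of_bool ((j, i) = (js l, cs l)))"
    unfolding cycle_shift_def by (rule sum_subtractf)
  also have "\<dots> = 0"
    using cycle cycle[OF mod_less_divisor]
    by (simp only: sum_of_bool_Pair_fst[OF I])
  finally show ?thesis .
qed

lemma cycle_shift_col_sum: "(\<Sum>j\<in>J. cycle_shift k js cs (j, i)) = 0"
proof -
  have "(\<Sum>j\<in>J. cycle_shift k js cs (j, i)) = (\<Sum>j\<in>J. \<Sum>l<k. of_bool ((j, i) = (js l, cs (Suc l mod k))))
      - (\<Sum>j\<in>J. \<Sum>l<k. of_bool ((j, i) = (js l, cs l)))"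
    unfolding cycle_shift_def by (rule sum_subtractf)
  also have "\<dots> = 0"
    using cycle sum_lessThan_Suc_mod[of "\<lambda>l. of_bool (i = cs l) :: real" k]
    by (simp only: sum_of_bool_Pair_snd[OF J])
  finally show ?thesis .
qed

lemma sum_cycle_shift_mult:
  "(\<Sum>x\<in>J \<times> I. cycle_shift k js cs x * g x) = (\<Sum>l<k. g (js l, cs (Suc l mod k)) - g (js l, cs l))"
proof -
  have "(\<Sum>x\<in>J \<times> I. (\<Sum>l<k. of_bool (x = (js l, cs (Suc l mod k)))) * g x) = (\<Sum>l<k. g (js l, cs (Suc l mod k)))"
    using cycle cycle[OF mod_less_divisor] J I by (intro sum_of_bool_points) auto
  moreover have "(\<Sum>x\<in>J \<times> I. (\<Sum>l<k. of_bool (x = (js l, cs l))) * g x) = (\<Sum>l<k. g (js l, cs l))"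
    using cycle J I by (intro sum_of_bool_points) auto
  ultimately show ?thesis
    unfolding cycle_shift_def left_diff_distrib sum_subtractf by (simp only:)
qed

lemma transport_plans_cycle_shift:
  fixes \<epsilon> :: real
  assumes p: "p \<in> transport_plans J I \<alpha> \<beta>"
    and "0 \<le> \<epsilon>" and room: "\<And>l. l < k \<Longrightarrow> real k * \<epsilon> \<le> p (js l, cs l)"
  shows "(\<lambda>x. p x + \<epsilon> * cycle_shift k js cs x) \<in> transport_plans J I \<alpha> \<beta>"
    and "plan_value c J I (\<lambda>x. p x + \<epsilon> * cycle_shift k js cs x)
      = plan_value c J I p + \<epsilon> * (\<Sum>l<k. c (js l) (cs (Suc l mod k)) - c (js l) (cs l))"
proof -
  note p_def = transport_plansD[OF p]
  have "0 \<le> p x + \<epsilon> * cycle_shift k js cs x" for x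
  proof (cases "\<exists>l<k. x = (js l, cs l)")
    case True
    then have "real k * \<epsilon> \<le> p x" using room by blast
    moreover have "\<epsilon> * - real k \<le> \<epsilon> * cycle_shift k js cs x"
      using cycle_shift_lower_bound(1) \<open>0 \<le> \<epsilon>\<close> by (rule mult_left_mono)
    ultimately show ?thesis by (simp add: mult.commute)
  next
    case False
    then show ?thesis using cycle_shift_lower_bound(2)[of x] \<open>0 \<le> \<epsilon>\<close> p_def(2)[of x] by simp
  qed
  then show "(\<lambda>x. p x + \<epsilon> * cycle_shift k js cs x) \<in> transport_plans J I \<alpha> \<beta>"
    using p_def cycle_shift_outside
    by (simp add: transport_plans_def sum.distrib sum_distrib_left[symmetric] cycle_shift_row_sum cycle_shift_col_sum)
  have "plan_value c J I (\<lambda>x. p x + \<epsilon> * cycle_shift k js cs x)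
      = plan_value c J I p + \<epsilon> * (\<Sum>x\<in>J \<times> I. cycle_shift k js cs x * case_prod c x)"
    by (simp add: plan_value_def distrib_right sum.distrib sum_distrib_left mult.assoc case_prod_beta)
  then show "plan_value c J I (\<lambda>x. p x + \<epsilon> * cycle_shift k js cs x)
      = plan_value c J I p + \<epsilon> * (\<Sum>l<k. c (js l) (cs (Suc l mod k)) - c (js l) (cs l))"
    by (simp only: sum_cycle_shift_mult) simp
qed

end

lemma optimal_plan_cyclically_monotone:
  assumes J: "finite J" and I: "finite I" and p: "p \<in> transport_plans J I \<alpha> \<beta>"
    and opt: "\<And>q. q \<in> transport_plans J I \<alpha> \<beta> \<Longrightarrow> plan_value c J I q \<le> plan_value c J I p"
  shows "cyclically_monotone c {x. 0 < p x}"
  unfolding cyclically_monotone_def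
proof (intro allI impI)
  fix k and js :: "nat \<Rightarrow> 'a" and cs :: "nat \<Rightarrow> 'b"
  assume cycle: "\<forall>l<k. (js l, cs l) \<in> {x. 0 < p x}"
  show "(\<Sum>l<k. c (js l) (cs (Suc l mod k)) - c (js l) (cs l)) \<le> 0"
  proof (cases "k = 0")
    case False
    define \<epsilon> where "\<epsilon> = Min ((\<lambda>l. p (js l, cs l)) ` {..<k}) / k"
    have "Min ((\<lambda>l. p (js l, cs l)) ` {..<k}) \<in> (\<lambda>l. p (js l, cs l)) ` {..<k}"
      using False by (intro Min_in) auto
    then have "0 < \<epsilon>" using cycle False by (auto simp: \<epsilon>_def)
    have cells: "js l \<in> J \<and> cs l \<in> I" if "l < k" for l
      using cycle that transport_plansD(1)[OF p, of "(js l, cs l)"] by fastforce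
    have bound: "k * \<epsilon> \<le> p (js l, cs l)" if "l < k" for l
      using that False by (simp add: \<epsilon>_def)
    note shift = transport_plans_cycle_shift[where k=k and js=js and cs=cs, OF J I cells p less_imp_le[OF \<open>0 < \<epsilon>\<close>] bound]
    have "plan_value c J I p + \<epsilon> * (\<Sum>l<k. c (js l) (cs (Suc l mod k)) - c (js l) (cs l))
        \<le> plan_value c J I p"
      using opt[OF shift(1)] by (simp only: shift(2))
    then show ?thesis using \<open>0 < \<epsilon>\<close> by (simp add: mult_le_0_iff)
  qed simp
qed

fun chain_weight :: "('b \<Rightarrow> 'b \<Rightarrow> real) \<Rightarrow> 'b list \<Rightarrow> real" where
  "chain_weight w (x # y # zs) = w x y + chain_weight w (y # zs)"
| "chain_weight w _ = 0"

lemma chain_weight_append: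
  "chain_weight w (xs @ y # ys) = chain_weight w (xs @ [y]) + chain_weight w (y # ys)"
  by (induction xs rule: induct_list012) auto

lemma chain_weight_conv_sum: "chain_weight w xs = (\<Sum>l<length xs - 1. w (xs ! l) (xs ! Suc l))"
proof (induction w xs rule: chain_weight.induct)
  case (1 w x y zs)
  have "(\<Sum>l<length (x # y # zs) - 1. w ((x # y # zs) ! l) ((x # y # zs) ! Suc l))
      = w x y + (\<Sum>l<length zs. w ((y # zs) ! l) ((y # zs) ! Suc l))"
    by (simp add: sum.lessThan_Suc_shift del: sum.lessThan_Suc)
  then show ?case using 1 by simp
qed auto

definition redirect_gain :: "('a \<Rightarrow> 'b \<Rightarrow> real) \<Rightarrow> ('a \<times> 'b) set \<Rightarrow> 'b \<Rightarrow> 'b \<Rightarrow> real" where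
  "redirect_gain c \<Gamma> i t = Max ((\<lambda>j. c j t - c j i) ` {j. (j, i) \<in> \<Gamma>})"

text \<open>Rockafellar's construction: the heaviest simple chain of redirections ending in \<open>t\<close>.\<close>
definition chain_potential :: "('a \<Rightarrow> 'b \<Rightarrow> real) \<Rightarrow> ('a \<times> 'b) set \<Rightarrow> 'b \<Rightarrow> real" where
  "chain_potential c \<Gamma> t = Max ((\<lambda>xs. chain_weight (redirect_gain c \<Gamma>) (xs @ [t]))
      ` {xs. distinct xs \<and> set xs \<subseteq> snd ` \<Gamma> \<and> t \<notin> set xs})"

context
  fixes c :: "'a \<Rightarrow> 'b \<Rightarrow> real" and \<Gamma> :: "('a \<times> 'b) set"
  assumes fin: "finite \<Gamma>"
begin

lemma finite_redirect_sources: "finite {j. (j, i) \<in> \<Gamma>}"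
  using finite_imageI[OF fin, of fst] by (rule finite_subset[rotated]) force

lemma redirect_gain_ge: "(j, i) \<in> \<Gamma> \<Longrightarrow> c j t - c j i \<le> redirect_gain c \<Gamma> i t"
  unfolding redirect_gain_def using finite_redirect_sources by (intro Max_ge) auto

lemma finite_simple_chains: "finite {xs. distinct xs \<and> set xs \<subseteq> snd ` \<Gamma> \<and> t \<notin> set xs}"
proof (rule finite_subset)
  show "{xs. distinct xs \<and> set xs \<subseteq> snd ` \<Gamma> \<and> t \<notin> set xs}
      \<subseteq> {xs. set xs \<subseteq> snd ` \<Gamma> \<and> length xs \<le> card (snd ` \<Gamma>)}"
    using fin by (auto simp: distinct_card[symmetric] intro!: card_mono)
qed (use fin in \<open>simp add: finite_lists_length_le\<close>)

lemma redirect_gain_attained: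
  assumes "i \<in> snd ` \<Gamma>"
  obtains j where "(j, i) \<in> \<Gamma>" and "redirect_gain c \<Gamma> i t = c j t - c j i"
proof -
  have "{j. (j, i) \<in> \<Gamma>} \<noteq> {}" using assms by force
  then have "redirect_gain c \<Gamma> i t \<in> (\<lambda>j. c j t - c j i) ` {j. (j, i) \<in> \<Gamma>}"
    unfolding redirect_gain_def using finite_redirect_sources by (intro Max_in) auto
  then show thesis using that by blast
qed

lemma cyclically_monotone_closed_chain:
  assumes mono: "cyclically_monotone c \<Gamma>" and "cs \<noteq> []" and cs: "set cs \<subseteq> snd ` \<Gamma>"
  shows "chain_weight (redirect_gain c \<Gamma>) cs + redirect_gain c \<Gamma> (last cs) (hd cs) \<le> 0"
proof -
  define k where "k = length cs"
  obtain m where m: "k = Suc m" using \<open>cs \<noteq> []\<close> by (cases k) (auto simp: k_def)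
  have "\<exists>j. (j, cs ! l) \<in> \<Gamma>
      \<and> redirect_gain c \<Gamma> (cs ! l) (cs ! (Suc l mod k)) = c j (cs ! (Suc l mod k)) - c j (cs ! l)"
    if "l < k" for l
    using redirect_gain_attained[of "cs ! l"] cs that by (metis k_def nth_mem subsetD)
  then obtain js where js: "\<And>l. l < k \<Longrightarrow> (js l, cs ! l) \<in> \<Gamma>
      \<and> redirect_gain c \<Gamma> (cs ! l) (cs ! (Suc l mod k)) = c (js l) (cs ! (Suc l mod k)) - c (js l) (cs ! l)"
    by metis
  have "chain_weight (redirect_gain c \<Gamma>) cs + redirect_gain c \<Gamma> (last cs) (hd cs)
      = (\<Sum>l<k. redirect_gain c \<Gamma> (cs ! l) (cs ! (Suc l mod k)))"
    using \<open>cs \<noteq> []\<close> by (simp add: chain_weight_conv_sum m k_def[symmetric] last_conv_nth hd_conv_nth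
        cong: sum.cong) (simp add: m)
  also have "\<dots> = (\<Sum>l<k. c (js l) (cs ! (Suc l mod k)) - c (js l) (cs ! l))"
    using js by simp
  also have "\<dots> \<le> 0"
    using mono js unfolding cyclically_monotone_def by blast
  finally show ?thesis .
qed

lemma chain_potential_ge_chain:
  assumes "distinct xs" "set xs \<subseteq> snd ` \<Gamma>" "t \<notin> set xs"
  shows "chain_weight (redirect_gain c \<Gamma>) (xs @ [t]) \<le> chain_potential c \<Gamma> t"
  unfolding chain_potential_def using finite_simple_chains assms by (intro Max_ge) auto

lemma chain_potential_attained:
  obtains xs where "distinct xs" "set xs \<subseteq> snd ` \<Gamma>" "t \<notin> set xs"
    and "chain_potential c \<Gamma> t = chain_weight (redirect_gain c \<Gamma>) (xs @ [t])"
proof -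
  have "[] \<in> {xs. distinct xs \<and> set xs \<subseteq> snd ` \<Gamma> \<and> t \<notin> set xs}" by simp
  then have "{xs. distinct xs \<and> set xs \<subseteq> snd ` \<Gamma> \<and> t \<notin> set xs} \<noteq> {}" by blast
  then have "chain_potential c \<Gamma> t
      \<in> (\<lambda>xs. chain_weight (redirect_gain c \<Gamma>) (xs @ [t])) ` {xs. distinct xs \<and> set xs \<subseteq> snd ` \<Gamma> \<and> t \<notin> set xs}"
    unfolding chain_potential_def using finite_simple_chains by (intro Max_in) auto
  then show thesis using that by blast
qed

text \<open>Either \<open>t\<close> extends the heaviest chain ending in \<open>i\<close>, or it already occurs on it and closes a
  cycle of non-positive weight.\<close>
lemma chain_potential_extend:
  assumes mono: "cyclically_monotone c \<Gamma>" and i: "i \<in> snd ` \<Gamma>"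
  shows "chain_potential c \<Gamma> i + redirect_gain c \<Gamma> i t \<le> chain_potential c \<Gamma> t"
proof -
  let ?w = "redirect_gain c \<Gamma>"
  obtain xs where xs: "distinct xs" "set xs \<subseteq> snd ` \<Gamma>" "i \<notin> set xs"
    and h_i: "chain_potential c \<Gamma> i = chain_weight ?w (xs @ [i])"
    by (rule chain_potential_attained)
  consider "t = i" | "t \<noteq> i" "t \<notin> set xs" | "t \<in> set xs" by blast
  then show ?thesis
  proof cases
    case 1
    obtain j where "(j, i) \<in> \<Gamma>" "?w i i = c j i - c j i" by (rule redirect_gain_attained[OF i])
    then show ?thesis using 1 by simp
  next
    case 2
    then show ?thesis
      using chain_potential_ge_chain[of "xs @ [i]" t] xs i h_i chain_weight_append[of ?w xs i "[t]"] by simp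
  next
    case 3
    then obtain as bs where xs_split: "xs = as @ t # bs" by (meson split_list)
    have "chain_weight ?w (t # bs @ [i]) + ?w i t \<le> 0"
      using cyclically_monotone_closed_chain[OF mono, of "t # bs @ [i]"] xs i by (simp add: xs_split)
    then show ?thesis
      using chain_potential_ge_chain[of as t] xs h_i chain_weight_append[of ?w as t "bs @ [i]"]
      by (simp add: xs_split)
  qed
qed

lemma cyclically_monotone_potential:
  assumes "cyclically_monotone c \<Gamma>" and "(j, i) \<in> \<Gamma>"
  shows "c j t - chain_potential c \<Gamma> t \<le> c j i - chain_potential c \<Gamma> i"
  using redirect_gain_ge[OF assms(2), of t] chain_potential_extend[OF assms(1), of i t] assms(2) by force

end

lemma plan_value_eq_potentials:
  assumes p: "p \<in> transport_plans J I \<alpha> \<beta>" and "finite J" "finite I"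
    and "\<And>j i. 0 < p (j, i) \<Longrightarrow> c j i = \<phi> j + \<psi> i"
  shows "plan_value c J I p = (\<Sum>j\<in>J. \<phi> j * \<alpha> j) + (\<Sum>i\<in>I. \<psi> i * \<beta> i)"
proof -
  have "plan_value c J I p = (\<Sum>(j, i)\<in>J \<times> I. p (j, i) * (\<phi> j + \<psi> i))"
    unfolding plan_value_def
  proof (intro sum.cong refl, clarify)
    fix j i
    show "p (j, i) * c j i = p (j, i) * (\<phi> j + \<psi> i)"
      using assms(4)[of j i] transport_plansD(2)[OF p, of "(j, i)"] by (cases "p (j, i) = 0") auto
  qed
  also have "\<dots> = (\<Sum>j\<in>J. \<phi> j * (\<Sum>i\<in>I. p (j, i))) + (\<Sum>i\<in>I. \<psi> i * (\<Sum>j\<in>J. p (j, i)))"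
    by (simp add: sum.cartesian_product[symmetric] sum.swap[of _ J] sum_distrib_left distrib_left sum.distrib
        mult.commute)
  also have "\<dots> = (\<Sum>j\<in>J. \<phi> j * \<alpha> j) + (\<Sum>i\<in>I. \<psi> i * \<beta> i)"
    using transport_plansD(3,4)[OF p] by simp
  finally show ?thesis .
qed

section \<open>Lifting discrete plans to couplings\<close>

lemma divide_mult_cancel_le:
  fixes x a b :: real
  assumes "0 \<le> x" "x \<le> a" "x \<le> b"
  shows "x / (a * b) * a * b = x"
  using assms by (cases "a * b = 0") auto

lemma mult_eq_self_if_normalized:
  fixes x m s :: real
  assumes "0 \<le> x" "x \<le> m" "s * m = m"
  shows "x * s = x"
  using assms by (cases "m = 0") auto

abbreviation cell_masses :: "'a measure \<Rightarrow> ('a \<Rightarrow> 'b) \<Rightarrow> 'b \<Rightarrow> real" where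
  "cell_masses M T \<equiv> \<lambda>j. measure M (T -` {j})"

definition cell_density :: "'a measure \<Rightarrow> 'a measure \<Rightarrow> ('a \<Rightarrow> 'b) \<Rightarrow> ('a \<Rightarrow> 'c) \<Rightarrow> ('b \<times> 'c \<Rightarrow> real) \<Rightarrow> 'b \<Rightarrow> 'c \<Rightarrow> real"
  where "cell_density \<nu> \<rho> T S p j i = p (j, i) / (measure \<nu> (T -` {j}) * measure \<rho> (S -` {i}))"

text \<open>Conditionally on the cell \<open>T -` {j} \<times> S -` {i}\<close>, the two coordinates are independent with
  laws \<open>\<nu>\<close> and \<open>\<rho>\<close> restricted to the cell, and the cell has mass \<open>p (j, i)\<close>.  Division by a null
  cell mass yields \<open>0\<close>, which is harmless because such cells carry no mass under \<open>p\<close>.\<close>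
definition cell_coupling :: "'a measure \<Rightarrow> 'a measure \<Rightarrow> ('a \<Rightarrow> 'b) \<Rightarrow> ('a \<Rightarrow> 'c) \<Rightarrow> ('b \<times> 'c \<Rightarrow> real) \<Rightarrow> ('a \<times> 'a) measure"
  where "cell_coupling \<nu> \<rho> T S p =
    density (\<nu> \<Otimes>\<^sub>M \<rho>) (\<lambda>z. ennreal (cell_density \<nu> \<rho> T S p (T (fst z)) (S (snd z))))"

context
  fixes \<nu> \<rho> :: "'a::euclidean_space measure" and T S :: "'a \<Rightarrow> 'a" and p :: "'a \<times> 'a \<Rightarrow> real"
  assumes \<nu>: "\<nu> \<in> prob_measures" and \<rho>: "\<rho> \<in> prob_measures"
    and T: "T \<in> borel_measurable borel" "finite (range T)"
    and S: "S \<in> borel_measurable borel" "finite (range S)"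
    and p: "p \<in> transport_plans (range T) (range S) (cell_masses \<nu> T) (cell_masses \<rho> S)"
begin

interpretation pair_prob_space \<nu> \<rho>
  using prob_measuresD(1)[OF \<nu>] prob_measuresD(1)[OF \<rho>]
  by (simp add: pair_prob_space_def pair_sigma_finite_def prob_space_imp_sigma_finite)

lemma level_sets_borel: "T -` {j} \<in> sets borel" "S -` {i} \<in> sets borel"
  using measurable_sets[OF T(1), of "{j}"] measurable_sets[OF S(1), of "{i}"] by simp_all

lemma cell_density_nonneg: "0 \<le> cell_density \<nu> \<rho> T S p j i"
  using transport_plansD(2)[OF p, of "(j, i)"] by (simp add: cell_density_def)

lemma cell_density_mult_masses:
  "cell_density \<nu> \<rho> T S p j i * measure \<nu> (T -` {j}) * measure \<rho> (S -` {i}) = p (j, i)"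
proof (cases "j \<in> range T \<and> i \<in> range S")
  case True
  then show ?thesis
    using transport_plans_le_marginals[OF p T(2) S(2), of j i] transport_plansD(2)[OF p, of "(j, i)"]
    unfolding cell_density_def by (intro divide_mult_cancel_le) auto
next
  case False
  then have "p (j, i) = 0" using transport_plansD(1)[OF p, of "(j, i)"] by blast
  then show ?thesis by (simp add: cell_density_def)
qed

lemma cell_density_borel_measurable:
  "(\<lambda>z. ennreal (cell_density \<nu> \<rho> T S p (T (fst z)) (S (snd z)))) \<in> borel_measurable (\<nu> \<Otimes>\<^sub>M \<rho>)"
proof -
  have T_\<nu>: "T \<in> borel_measurable \<nu>" and S_\<rho>: "S \<in> borel_measurable \<rho>"
    using T(1) S(1) measurable_cong_sets[OF prob_measuresD(2)[OF \<nu>] refl]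
      measurable_cong_sets[OF prob_measuresD(2)[OF \<rho>] refl] by blast+
  have T_fst: "(\<lambda>z. T (fst z)) \<in> borel_measurable (\<nu> \<Otimes>\<^sub>M \<rho>)" "finite (range (\<lambda>z. T (fst z)))"
    by (rule measurable_compose[OF measurable_fst T_\<nu>], rule finite_subset[OF _ T(2)]) auto
  have S_snd: "(\<lambda>z. S (snd z)) \<in> borel_measurable (\<nu> \<Otimes>\<^sub>M \<rho>)" "finite (range (\<lambda>z. S (snd z)))"
    by (rule measurable_compose[OF measurable_snd S_\<rho>], rule finite_subset[OF _ S(2)]) auto
  show ?thesis
  proof (rule measurable_finite_range_comp[OF T_fst, where g="\<lambda>j z. ennreal (cell_density \<nu> \<rho> T S p j (S (snd z)))"])
    fix j
    show "(\<lambda>z. ennreal (cell_density \<nu> \<rho> T S p j (S (snd z)))) \<in> borel_measurable (\<nu> \<Otimes>\<^sub>M \<rho>)"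
      by (rule measurable_finite_range_comp[OF S_snd, where g="\<lambda>i z. ennreal (cell_density \<nu> \<rho> T S p j i)"]) simp
  qed
qed

lemma emeasure_cell_coupling_Times:
  assumes A: "A \<in> sets borel" and B: "B \<in> sets borel"
  shows "emeasure (cell_coupling \<nu> \<rho> T S p) (A \<times> B) = ennreal (\<Sum>(j, i)\<in>range T \<times> range S.
      cell_density \<nu> \<rho> T S p j i * measure \<nu> (A \<inter> T -` {j}) * measure \<rho> (B \<inter> S -` {i}))"
proof -
  note N = prob_measuresD[OF \<nu>] and R = prob_measuresD[OF \<rho>]
  let ?c = "cell_density \<nu> \<rho> T S p"
  have cells: "(A \<inter> T -` {j}) \<times> (B \<inter> S -` {i}) \<in> sets (\<nu> \<Otimes>\<^sub>M \<rho>)" for j i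
    using A B N(2) R(2) level_sets_borel by (intro pair_measureI) auto
  have "emeasure (cell_coupling \<nu> \<rho> T S p) (A \<times> B)
      = (\<integral>\<^sup>+ z. ennreal (?c (T (fst z)) (S (snd z))) * indicator (A \<times> B) z \<partial>(\<nu> \<Otimes>\<^sub>M \<rho>))"
    unfolding cell_coupling_def using A B N(2) R(2)
    by (intro emeasure_density[OF cell_density_borel_measurable]) (auto intro: pair_measureI)
  also have "\<dots> = (\<integral>\<^sup>+ z. (\<Sum>(j, i)\<in>range T \<times> range S.
      ennreal (?c j i) * indicator ((A \<inter> T -` {j}) \<times> (B \<inter> S -` {i})) z) \<partial>(\<nu> \<Otimes>\<^sub>M \<rho>))"
  proof (intro nn_integral_cong)
    fix z :: "'a \<times> 'a"
    have "(\<Sum>(j, i)\<in>range T \<times> range S. ennreal (?c j i) * indicator ((A \<inter> T -` {j}) \<times> (B \<inter> S -` {i})) z)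
        = (\<Sum>x\<in>range T \<times> range S. if x = (T (fst z), S (snd z)) then ennreal (?c (T (fst z)) (S (snd z))) * indicator (A \<times> B) z else 0)"
      by (intro sum.cong) (auto simp: indicator_def)
    also have "\<dots> = ennreal (?c (T (fst z)) (S (snd z))) * indicator (A \<times> B) z"
      using T(2) S(2) by (simp add: sum.delta')
    finally show "ennreal (?c (T (fst z)) (S (snd z))) * indicator (A \<times> B) z
        = (\<Sum>(j, i)\<in>range T \<times> range S. ennreal (?c j i) * indicator ((A \<inter> T -` {j}) \<times> (B \<inter> S -` {i})) z)"
      by (rule sym)
  qed
  also have "\<dots> = (\<Sum>(j, i)\<in>range T \<times> range S. ennreal (?c j i) * emeasure (\<nu> \<Otimes>\<^sub>M \<rho>) ((A \<inter> T -` {j}) \<times> (B \<inter> S -` {i})))"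
    using cells by (subst nn_integral_sum) (auto simp: case_prod_beta nn_integral_cmult_indicator)
  also have "\<dots> = (\<Sum>(j, i)\<in>range T \<times> range S. ennreal (?c j i * measure \<nu> (A \<inter> T -` {j}) * measure \<rho> (B \<inter> S -` {i})))"
    using A B N(2) R(2) level_sets_borel cell_density_nonneg
    by (intro sum.cong refl) (auto simp: M2.emeasure_pair_measure_Times M1.emeasure_eq_measure
        M2.emeasure_eq_measure ennreal_mult mult.assoc)
  also have "\<dots> = ennreal (\<Sum>(j, i)\<in>range T \<times> range S. ?c j i * measure \<nu> (A \<inter> T -` {j}) * measure \<rho> (B \<inter> S -` {i}))"
    using cell_density_nonneg by (subst sum_ennreal[symmetric]) (auto simp: case_prod_beta)
  finally show ?thesis .
qed

lemma emeasure_cell_coupling_fst: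
  assumes A: "A \<in> sets borel"
  shows "emeasure (cell_coupling \<nu> \<rho> T S p) (A \<times> UNIV) = emeasure \<nu> A"
proof -
  let ?c = "cell_density \<nu> \<rho> T S p"
  have "measure \<nu> (A \<inter> T -` {j}) * (\<Sum>i\<in>range S. ?c j i * measure \<rho> (S -` {i})) = measure \<nu> (A \<inter> T -` {j})"
    if "j \<in> range T" for j
  proof (rule mult_eq_self_if_normalized)
    show "measure \<nu> (A \<inter> T -` {j}) \<le> measure \<nu> (T -` {j})"
      using A level_sets_borel prob_measuresD(2)[OF \<nu>] by (intro M1.finite_measure_mono) auto
    have "(\<Sum>i\<in>range S. ?c j i * measure \<rho> (S -` {i})) * measure \<nu> (T -` {j})
        = (\<Sum>i\<in>range S. ?c j i * measure \<nu> (T -` {j}) * measure \<rho> (S -` {i}))"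
      by (simp add: sum_distrib_left sum_distrib_right mult_ac)
    also have "\<dots> = measure \<nu> (T -` {j})"
      using cell_density_mult_masses transport_plansD(3)[OF p that] by simp
    finally show "(\<Sum>i\<in>range S. ?c j i * measure \<rho> (S -` {i})) * measure \<nu> (T -` {j}) = measure \<nu> (T -` {j})" .
  qed simp
  then have "(\<Sum>(j, i)\<in>range T \<times> range S. ?c j i * measure \<nu> (A \<inter> T -` {j}) * measure \<rho> (UNIV \<inter> S -` {i}))
      = (\<Sum>j\<in>range T. measure \<nu> (A \<inter> T -` {j}))"
    by (simp add: sum.cartesian_product[symmetric] sum_distrib_left mult_ac)
  also have "\<dots> = measure \<nu> A"
    using sum_measure_Int_level_sets[OF M1.finite_measure_axioms prob_measuresD(2)[OF \<nu>] T A] .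
  finally show ?thesis using emeasure_cell_coupling_Times[OF A, of UNIV] by (simp add: M1.emeasure_eq_measure)
qed

lemma emeasure_cell_coupling_snd:
  assumes B: "B \<in> sets borel"
  shows "emeasure (cell_coupling \<nu> \<rho> T S p) (UNIV \<times> B) = emeasure \<rho> B"
proof -
  let ?c = "cell_density \<nu> \<rho> T S p"
  have "measure \<rho> (B \<inter> S -` {i}) * (\<Sum>j\<in>range T. ?c j i * measure \<nu> (T -` {j})) = measure \<rho> (B \<inter> S -` {i})"
    if "i \<in> range S" for i
  proof (rule mult_eq_self_if_normalized)
    show "measure \<rho> (B \<inter> S -` {i}) \<le> measure \<rho> (S -` {i})"
      using B level_sets_borel prob_measuresD(2)[OF \<rho>] by (intro M2.finite_measure_mono) auto
    have "(\<Sum>j\<in>range T. ?c j i * measure \<nu> (T -` {j})) * measure \<rho> (S -` {i})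
        = (\<Sum>j\<in>range T. ?c j i * measure \<nu> (T -` {j}) * measure \<rho> (S -` {i}))"
      by (simp add: sum_distrib_left sum_distrib_right mult_ac)
    also have "\<dots> = measure \<rho> (S -` {i})"
      using cell_density_mult_masses transport_plansD(4)[OF p that] by simp
    finally show "(\<Sum>j\<in>range T. ?c j i * measure \<nu> (T -` {j})) * measure \<rho> (S -` {i}) = measure \<rho> (S -` {i})" .
  qed simp
  then have "(\<Sum>(j, i)\<in>range T \<times> range S. ?c j i * measure \<nu> (UNIV \<inter> T -` {j}) * measure \<rho> (B \<inter> S -` {i}))
      = (\<Sum>i\<in>range S. measure \<rho> (B \<inter> S -` {i}))"
    by (simp add: sum.cartesian_product[symmetric] sum_distrib_left mult_ac, subst sum.swap, simp)
  also have "\<dots> = measure \<rho> B"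
    using sum_measure_Int_level_sets[OF M2.finite_measure_axioms prob_measuresD(2)[OF \<rho>] S B] .
  finally show ?thesis using emeasure_cell_coupling_Times[OF _ B, of UNIV] by (simp add: M2.emeasure_eq_measure)
qed

lemma cell_coupling_in_couplings: "cell_coupling \<nu> \<rho> T S p \<in> couplings \<nu> \<rho>"
proof -
  note N = prob_measuresD[OF \<nu>] and R = prob_measuresD[OF \<rho>]
  let ?\<gamma> = "cell_coupling \<nu> \<rho> T S p"
  have sets_\<gamma>: "sets ?\<gamma> = sets (borel \<Otimes>\<^sub>M borel)"
    unfolding cell_coupling_def sets_density by (rule sets_pair_measure_cong[OF N(2) R(2)])
  have space_\<gamma>: "space ?\<gamma> = UNIV"
    unfolding cell_coupling_def by (simp add: space_pair_measure N(3) R(3))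
  have "distr ?\<gamma> borel fst = \<nu>"
  proof (rule measure_eqI)
    fix A assume "A \<in> sets (distr ?\<gamma> borel fst)"
    moreover have "fst -` A \<inter> space ?\<gamma> = A \<times> UNIV" by (auto simp: space_\<gamma>)
    ultimately show "emeasure (distr ?\<gamma> borel fst) A = emeasure \<nu> A"
      using sets_\<gamma> by (simp add: emeasure_distr emeasure_cell_coupling_fst)
  qed (simp add: N(2))
  moreover have "distr ?\<gamma> borel snd = \<rho>"
  proof (rule measure_eqI)
    fix B assume "B \<in> sets (distr ?\<gamma> borel snd)"
    moreover have "snd -` B \<inter> space ?\<gamma> = UNIV \<times> B" by (auto simp: space_\<gamma>)
    ultimately show "emeasure (distr ?\<gamma> borel snd) B = emeasure \<rho> B"
      using sets_\<gamma> by (simp add: emeasure_distr emeasure_cell_coupling_snd)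
  qed (simp add: R(2))
  moreover have "prob_space ?\<gamma>"
    using emeasure_cell_coupling_fst[of UNIV] N(3) M1.emeasure_space_1 by (intro prob_spaceI) (simp add: space_\<gamma>)
  ultimately show ?thesis using sets_\<gamma> by (simp add: couplings_def)
qed

lemma measure_cell_coupling_cell: "measure (cell_coupling \<nu> \<rho> T S p) (T -` {j} \<times> S -` {i}) = p (j, i)"
proof -
  have "(\<Sum>(j', i')\<in>range T \<times> range S. cell_density \<nu> \<rho> T S p j' i' * measure \<nu> (T -` {j} \<inter> T -` {j'})
      * measure \<rho> (S -` {i} \<inter> S -` {i'})) = (\<Sum>x\<in>range T \<times> range S. if x = (j, i) then p (j, i) else 0)"
  proof (intro sum.cong refl, clarify)
    fix j' i'
    have "T -` {j} \<inter> T -` {j'} = (if j' = j then T -` {j} else {})"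
      and "S -` {i} \<inter> S -` {i'} = (if i' = i then S -` {i} else {})" by auto
    then show "cell_density \<nu> \<rho> T S p j' i' * measure \<nu> (T -` {j} \<inter> T -` {j'}) * measure \<rho> (S -` {i} \<inter> S -` {i'})
        = (if (j', i') = (j, i) then p (j, i) else 0)"
      using cell_density_mult_masses[of j i] by simp
  qed
  also have "\<dots> = p (j, i)" using transport_plansD(1)[OF p, of "(j, i)"] T(2) S(2) by (auto simp: sum.delta')
  finally show ?thesis
    using emeasure_cell_coupling_Times[OF level_sets_borel] transport_plansD(2)[OF p] by (simp add: measure_def)
qed

lemma integral_cell_coupling:
  fixes c :: "'a \<Rightarrow> 'a \<Rightarrow> real"
  shows "integrable (cell_coupling \<nu> \<rho> T S p) (\<lambda>z. c (T (fst z)) (S (snd z)))"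
    and "(\<integral>z. c (T (fst z)) (S (snd z)) \<partial>cell_coupling \<nu> \<rho> T S p) = plan_value c (range T) (range S) p"
proof -
  let ?\<gamma> = "cell_coupling \<nu> \<rho> T S p"
  interpret \<gamma>: prob_space ?\<gamma> using couplings_prob_space[OF cell_coupling_in_couplings] .
  define U where "U z = (T (fst z), S (snd z))" for z :: "'a \<times> 'a"
  have U: "U \<in> borel_measurable ?\<gamma>"
    unfolding U_def[abs_def] borel_prod[symmetric] using T(1) S(1)
    by (intro couplings_measurable[OF cell_coupling_in_couplings] measurable_Pair) auto
  have range_U: "range U = range T \<times> range S"
  proof
    show "range T \<times> range S \<subseteq> range U"
    proof clarify
      fix x y show "(T x, S y) \<in> range U" using rangeI[of U "(x, y)"] by (simp add: U_def)
    qed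
  qed (auto simp: U_def)
  then have finite_U: "finite (range U)" using T(2) S(2) by simp
  show "integrable ?\<gamma> (\<lambda>z. c (T (fst z)) (S (snd z)))"
    using integral_finite_range(1)[OF U finite_U \<gamma>.finite_measure_axioms, of "case_prod c"] by (simp add: U_def)
  have "space ?\<gamma> = UNIV"
    using prob_measuresD(3)[OF \<nu>] prob_measuresD(3)[OF \<rho>] by (simp add: cell_coupling_def space_pair_measure)
  then have cell_U: "U -` {u} \<inter> space ?\<gamma> = T -` {fst u} \<times> S -` {snd u}" for u
    by (cases u) (auto simp: U_def)
  have "(\<integral>z. case_prod c (U z) \<partial>?\<gamma>) = (\<Sum>u\<in>range U. case_prod c u * measure ?\<gamma> (U -` {u} \<inter> space ?\<gamma>))"
    by (rule integral_finite_range(2)[OF U finite_U \<gamma>.finite_measure_axioms])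
  also have "\<dots> = plan_value c (range T) (range S) p"
    unfolding range_U cell_U measure_cell_coupling_cell plan_value_def by (simp add: case_prod_beta mult.commute)
  finally show "(\<integral>z. c (T (fst z)) (S (snd z)) \<partial>?\<gamma>) = plan_value c (range T) (range S) p"
    by (simp add: U_def)
qed

end

section \<open>From measures to convex functions\<close>

lemma optimal_plan_C1_potentials:
  fixes J I :: "'a::euclidean_space set"
  assumes J: "finite J" and I: "finite I" "I \<noteq> {}" "\<And>t. t \<in> I \<Longrightarrow> norm t \<le> 1"
    and p: "p \<in> transport_plans J I \<alpha> \<beta>"
    and opt: "\<And>q. q \<in> transport_plans J I \<alpha> \<beta> \<Longrightarrow> plan_value (\<bullet>) J I q \<le> plan_value (\<bullet>) J I p"
  obtains f h where "f \<in> C1" and "\<And>y t. t \<in> I \<Longrightarrow> y \<bullet> t \<le> f y + h t"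
    and "plan_value (\<bullet>) J I p = (\<Sum>j\<in>J. f j * \<alpha> j) + (\<Sum>i\<in>I. h i * \<beta> i)"
proof -
  have support: "{x. 0 < p x} \<subseteq> J \<times> I"
  proof
    fix x assume "x \<in> {x. 0 < p x}"
    then show "x \<in> J \<times> I" using transport_plansD(1)[OF p, of x] by auto
  qed
  then have "finite {x. 0 < p x}" using J I(1) by (rule finite_subset[OF _ finite_cartesian_product])
  define h where "h = chain_potential (\<bullet>) {x. 0 < p x}"
  have h: "j \<bullet> t - h t \<le> j \<bullet> i - h i" if "(j, i) \<in> {x. 0 < p x}" for j i t
    unfolding h_def using cyclically_monotone_potential[OF \<open>finite {x. 0 < p x}\<close>
        optimal_plan_cyclically_monotone[OF J I(1) p opt] that] .
  define f where "f y = Max ((\<lambda>t. t \<bullet> y + - h t) ` I)" for y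
  have "f \<in> C1" unfolding f_def[abs_def] using I by (rule Max_affine_in_C1)
  moreover have f_ge: "y \<bullet> t \<le> f y + h t" if "t \<in> I" for y t
  proof -
    have "t \<bullet> y + - h t \<le> f y" unfolding f_def using I(1) that by (intro Max_ge) auto
    then show ?thesis by (simp add: inner_commute)
  qed
  moreover have "j \<bullet> i = f j + h i" if "0 < p (j, i)" for j i
  proof -
    have "f j \<in> (\<lambda>t. t \<bullet> j + - h t) ` I" unfolding f_def using I(1,2) by (intro Max_in) auto
    then obtain t where "t \<in> I" "f j = t \<bullet> j - h t" by auto
    then have "f j \<le> j \<bullet> i - h i" using h[of j i t] that by (simp add: inner_commute)
    moreover have "i \<in> I" using support that by auto
    ultimately show ?thesis using f_ge[of i j] by simp
  qed
  then have "plan_value (\<bullet>) J I p = (\<Sum>j\<in>J. f j * \<alpha> j) + (\<Sum>i\<in>I. h i * \<beta> i)"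
    by (intro plan_value_eq_potentials[OF p J I(1)])
  ultimately show thesis by (rule that)
qed

lemma plan_value_le_Ccost:
  fixes \<nu> \<rho> :: "'a::euclidean_space measure" and T S :: "'a \<Rightarrow> 'a"
  assumes \<nu>: "\<nu> \<in> prob_measures" "integrable \<nu> norm" and \<rho>: "\<rho> \<in> P1"
    and T: "T \<in> borel_measurable borel" "finite (range T)" "\<And>y. norm (T y) \<le> norm y"
      "integrable \<nu> (\<lambda>y. norm (y - T y))"
    and S: "S \<in> borel_measurable borel" "finite (range S)" "\<And>z. norm z \<le> 1 \<Longrightarrow> norm (z - S z) \<le> \<delta>"
    and p: "p \<in> transport_plans (range T) (range S) (cell_masses \<nu> T) (cell_masses \<rho> S)"
  shows "plan_value (\<bullet>) (range T) (range S) p \<le> Ccost \<nu> \<rho> + (\<integral>y. norm (y - T y) \<partial>\<nu>) + \<delta> * (\<integral>y. norm y \<partial>\<nu>)"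
proof -
  note \<rho>' = P1_prob_measures[OF \<rho>]
  define \<gamma> where "\<gamma> = cell_coupling \<nu> \<rho> T S p"
  have \<gamma>: "\<gamma> \<in> couplings \<nu> \<rho>" unfolding \<gamma>_def by (rule cell_coupling_in_couplings[OF \<nu>(1) \<rho>' T(1,2) S(1,2) p])
  note quantized = integral_cell_coupling[OF \<nu>(1) \<rho>' T(1,2) S(1,2) p, of "(\<bullet>)", folded \<gamma>_def]
  define err where "err y = norm (y - T y) + \<delta> * norm y" for y
  have err: "err \<in> borel_measurable borel" unfolding err_def[abs_def] using T(1) by measurable
  have "T (fst z) \<bullet> S (snd z) - err (fst z) \<le> fst z \<bullet> snd z" if "snd z \<in> cball 0 1" for z
  proof -
    obtain y w where z: "z = (y, w)" by (cases z)
    then have w: "norm w \<le> 1" using that by simp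
    have "\<bar>(y - T y) \<bullet> w\<bar> \<le> norm (y - T y)"
      using Cauchy_Schwarz_ineq2[of "y - T y" w] w by (simp add: mult_left_le order_trans)
    moreover have "\<bar>T y \<bullet> (w - S w)\<bar> \<le> norm y * \<delta>"
      using Cauchy_Schwarz_ineq2[of "T y" "w - S w"] T(3)[of y] S(3)[OF w]
      by (meson mult_mono norm_ge_zero order_trans)
    moreover have "y \<bullet> w - T y \<bullet> S w = (y - T y) \<bullet> w + T y \<bullet> (w - S w)"
      by (simp add: inner_diff_left inner_diff_right)
    ultimately show ?thesis by (simp add: z err_def mult.commute abs_le_iff)
  qed
  moreover have "AE z in \<gamma>. snd z \<in> cball 0 1"
    using P1_AE_norm_le_1[OF \<rho>] by (intro couplings_AE_snd[OF \<gamma>]) auto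
  moreover have int_err: "integrable \<gamma> (\<lambda>z. err (fst z))"
    using couplings_integral_fst(2)[OF \<gamma> err] T(4) \<nu>(2) by (simp add: err_def[abs_def])
  ultimately have "(\<integral>z. T (fst z) \<bullet> S (snd z) - err (fst z) \<partial>\<gamma>) \<le> (\<integral>z. fst z \<bullet> snd z \<partial>\<gamma>)"
    using quantized(1)
    by (intro integral_mono_AE couplings_inner_bound(1)[OF \<gamma> \<rho> \<nu>(2)]) (auto elim!: eventually_mono)
  also have "\<dots> \<le> Ccost \<nu> \<rho>" by (rule coupling_integral_le_Ccost[OF \<nu>(1) \<rho> \<nu>(2) \<gamma>])
  finally show ?thesis
    using quantized int_err couplings_integral_fst(1)[OF \<gamma> err] T(4) \<nu>(2) by (simp add: err_def[abs_def])
qed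

lemma integral_C1_le_quantized:
  fixes \<nu> :: "'a::euclidean_space measure"
  assumes \<nu>: "\<nu> \<in> prob_measures" "integrable \<nu> norm" and f: "f \<in> C1"
    and T: "T \<in> borel_measurable borel" "finite (range T)" "integrable \<nu> (\<lambda>y. norm (y - T y))"
  shows "(\<integral>y. f y \<partial>\<nu>) \<le> (\<Sum>j\<in>range T. f j * cell_masses \<nu> T j) + (\<integral>y. norm (y - T y) \<partial>\<nu>)"
proof -
  note N = prob_measuresD[OF \<nu>(1)]
  interpret \<nu>: prob_space \<nu> by (rule N(1))
  have T_\<nu>: "T \<in> borel_measurable \<nu>" using T(1) measurable_cong_sets[OF N(2) refl] by blast
  have "f y \<le> f (T y) + norm (y - T y)" for y using C1_diff_le[OF f, of y "T y"] by simp
  then have "(\<integral>y. f y \<partial>\<nu>) \<le> (\<integral>y. f (T y) + norm (y - T y) \<partial>\<nu>)"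
    using C1_integrable[OF f N(2) \<nu>.finite_measure_axioms \<nu>(2)] T(3)
      integral_finite_range(1)[OF T_\<nu> T(2) \<nu>.finite_measure_axioms]
    by (intro integral_mono) auto
  also have "\<dots> = (\<Sum>j\<in>range T. f j * cell_masses \<nu> T j) + (\<integral>y. norm (y - T y) \<partial>\<nu>)"
    using integral_finite_range[OF T_\<nu> T(2) \<nu>.finite_measure_axioms, of f] T(3) N(3) by simp
  finally show ?thesis .
qed

lemma Ccost_le_quantized_potentials:
  fixes \<mu> \<rho> :: "'a::euclidean_space measure" and S :: "'a \<Rightarrow> 'a"
  assumes \<mu>: "\<mu> \<in> prob_measures" "integrable \<mu> norm" and \<rho>: "\<rho> \<in> P1" and f: "f \<in> C1"
    and S: "S \<in> borel_measurable borel" "finite (range S)" "\<And>z. norm z \<le> 1 \<Longrightarrow> norm (z - S z) \<le> \<delta>"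
    and dominate: "\<And>y t. t \<in> range S \<Longrightarrow> y \<bullet> t \<le> f y + h t"
  shows "Ccost \<mu> \<rho> \<le> (\<integral>y. f y \<partial>\<mu>) + \<delta> * (\<integral>y. norm y \<partial>\<mu>) + (\<Sum>i\<in>range S. h i * cell_masses \<rho> S i)"
proof -
  note M = prob_measuresD[OF \<mu>(1)] and R = prob_measuresD[OF P1_prob_measures[OF \<rho>]]
  interpret \<mu>: prob_space \<mu> by (rule M(1))
  interpret \<rho>: prob_space \<rho> by (rule R(1))
  have S_\<rho>: "S \<in> borel_measurable \<rho>" using S(1) measurable_cong_sets[OF R(2) refl] by blast
  have int_f: "integrable \<mu> f" by (rule C1_integrable[OF f M(2) \<mu>.finite_measure_axioms \<mu>(2)])
  have "Ccost \<mu> \<rho> \<le> (\<integral>y. f y + \<delta> * norm y \<partial>\<mu>) + (\<integral>z. h (S z) \<partial>\<rho>)"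
  proof (rule Ccost_le_potentials[OF \<mu>(1) \<rho> \<mu>(2)])
    show "(\<lambda>y. f y + \<delta> * norm y) \<in> borel_measurable borel" using C1_borel_measurable[OF f] by measurable
    show "(\<lambda>z. h (S z)) \<in> borel_measurable borel"
      by (rule measurable_finite_range_comp[OF S(1,2), where g="\<lambda>i z. h i"]) simp
    show "integrable \<rho> (\<lambda>z. h (S z))" by (rule integral_finite_range(1)[OF S_\<rho> S(2) \<rho>.finite_measure_axioms])
    show "AE z in \<rho>. z \<in> cball 0 1" using P1_AE_norm_le_1[OF \<rho>] by simp
    show "y \<bullet> z \<le> f y + \<delta> * norm y + h (S z)" if "z \<in> cball 0 1" for y z
    proof -
      have "y \<bullet> (z - S z) \<le> norm y * \<delta>"
        using norm_cauchy_schwarz[of y "z - S z"] S(3)[of z] that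
        by (meson mult_left_mono norm_ge_zero order_trans mem_cball_0)
      then show ?thesis using dominate[of "S z" y] by (simp add: inner_diff_right mult.commute)
    qed
  qed (use int_f \<mu>(2) in simp_all)
  also have "\<dots> = (\<integral>y. f y \<partial>\<mu>) + \<delta> * (\<integral>y. norm y \<partial>\<mu>) + (\<Sum>i\<in>range S. h i * cell_masses \<rho> S i)"
    using int_f \<mu>(2) integral_finite_range(2)[OF S_\<rho> S(2) \<rho>.finite_measure_axioms, of h] R(3) by simp
  finally show ?thesis .
qed

text \<open>The potentials of an optimal plan between the quantized measures are a \<open>C1\<close>-function \<open>f\<close> and
  a function \<open>h\<close> on the grid with \<open>y \<bullet> t \<le> f y + h t\<close>: integrating this against \<open>\<mu>\<close> and \<open>\<rho>\<close> bounds
  \<open>Ccost \<mu> \<rho>\<close> from above, while equality on the plan's support bounds \<open>Ccost \<nu> \<rho>\<close> from below.\<close>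
lemma exists_C1_gap_le_Ccost_gap_discretized:
  fixes \<mu> \<nu> \<rho> :: "'a::euclidean_space measure" and T S :: "'a \<Rightarrow> 'a"
  assumes \<mu>: "\<mu> \<in> prob_measures" "integrable \<mu> norm" and \<nu>: "\<nu> \<in> prob_measures" "integrable \<nu> norm"
    and \<rho>: "\<rho> \<in> P1"
    and T: "T \<in> borel_measurable borel" "finite (range T)" "\<And>y. norm (T y) \<le> norm y"
      "integrable \<nu> (\<lambda>y. norm (y - T y))"
    and S: "S \<in> borel_measurable borel" "finite (range S)" "\<And>z. norm (S z) \<le> 1"
      "\<And>z. norm z \<le> 1 \<Longrightarrow> norm (z - S z) \<le> \<delta>"
  shows "\<exists>f\<in>C1. (\<integral>x. f x \<partial>\<nu>) - (\<integral>x. f x \<partial>\<mu>)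
    \<le> Ccost \<nu> \<rho> - Ccost \<mu> \<rho> + 2 * (\<integral>y. norm (y - T y) \<partial>\<nu>) + \<delta> * ((\<integral>x. norm x \<partial>\<mu>) + (\<integral>y. norm y \<partial>\<nu>))"
proof -
  note N = prob_measuresD[OF \<nu>(1)] and R = prob_measuresD[OF P1_prob_measures[OF \<rho>]]
  interpret \<nu>: prob_space \<nu> by (rule N(1))
  interpret \<rho>: prob_space \<rho> by (rule R(1))
  let ?plans = "transport_plans (range T) (range S) (cell_masses \<nu> T) (cell_masses \<rho> S)"
  have "sum (cell_masses \<nu> T) (range T) = 1" "sum (cell_masses \<rho> S) (range S) = 1"
    using sum_measure_Int_level_sets[OF \<nu>.finite_measure_axioms N(2) T(1,2), of UNIV]
      sum_measure_Int_level_sets[OF \<rho>.finite_measure_axioms R(2) S(1,2), of UNIV]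
      \<nu>.prob_space[unfolded N(3)] \<rho>.prob_space[unfolded R(3)] by simp_all
  then have "?plans \<noteq> {}" using product_plan_in_transport_plans[of "cell_masses \<nu> T" "cell_masses \<rho> S"] by auto
  then obtain p where p: "p \<in> ?plans"
    and opt: "\<And>q. q \<in> ?plans \<Longrightarrow> plan_value (\<bullet>) (range T) (range S) q \<le> plan_value (\<bullet>) (range T) (range S) p"
    using optimal_plan_exists[OF T(2) S(2)] by metis
  obtain f h where f: "f \<in> C1" and dominate: "\<And>y t. t \<in> range S \<Longrightarrow> y \<bullet> t \<le> f y + h t"
    and duality: "plan_value (\<bullet>) (range T) (range S) p
      = (\<Sum>j\<in>range T. f j * cell_masses \<nu> T j) + (\<Sum>i\<in>range S. h i * cell_masses \<rho> S i)"
    using optimal_plan_C1_potentials[OF T(2) S(2) _ _ p opt] S(3) by blast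
  show ?thesis
    using integral_C1_le_quantized[OF \<nu> f T(1,2,4)] Ccost_le_quantized_potentials[OF \<mu> \<rho> f S(1,2,4) dominate]
      plan_value_le_Ccost[OF \<nu> \<rho> T S(1,2,4) p] duality
    by (intro bexI[OF _ f]) (simp add: algebra_simps)
qed

lemma exists_C1_gap_le_Ccost_gap:
  fixes \<mu> \<nu> \<rho> :: "'a::euclidean_space measure"
  assumes \<mu>: "\<mu> \<in> prob_measures" "integrable \<mu> norm" and \<nu>: "\<nu> \<in> prob_measures" "integrable \<nu> norm"
    and \<rho>: "\<rho> \<in> P1" and "e > 0"
  shows "\<exists>f\<in>C1. (\<integral>x. f x \<partial>\<nu>) - (\<integral>x. f x \<partial>\<mu>) \<le> Ccost \<nu> \<rho> - Ccost \<mu> \<rho> + e"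
proof -
  note N = prob_measuresD[OF \<nu>(1)]
  obtain d R where d: "d > 0" and T_error: "(\<integral>y. norm (y - quantize d R y) \<partial>\<nu>) \<le> e / 4"
    using quantize_error_small[OF N(2) \<nu>(2), of "e / 4"] \<open>e > 0\<close> by auto
  define m where "m = (\<integral>x. norm x \<partial>\<mu>) + (\<integral>y. norm y \<partial>\<nu>)"
  have "m \<ge> 0" by (simp add: m_def)
  define d' where "d' = e / (2 * DIM('a) * (m + 1))"
  have d': "d' > 0" using \<open>e > 0\<close> \<open>m \<ge> 0\<close> by (simp add: d'_def)
  have "DIM('a) * d' * m = e / 2 * (m / (m + 1))" by (simp add: d'_def)
  also have "\<dots> \<le> e / 2" using \<open>e > 0\<close> \<open>m \<ge> 0\<close> by (intro mult_left_le) auto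
  finally have S_error: "DIM('a) * d' * m \<le> e / 2" .
  have S_norm: "norm (quantize d' 1 z) \<le> 1" for z :: 'a
    using norm_quantize_le[OF d', of 1 z] by (cases "norm z \<le> 1") (auto simp: quantize_def)
  obtain f where "f \<in> C1" and "(\<integral>x. f x \<partial>\<nu>) - (\<integral>x. f x \<partial>\<mu>) \<le> Ccost \<nu> \<rho> - Ccost \<mu> \<rho>
      + 2 * (\<integral>y. norm (y - quantize d R y) \<partial>\<nu>) + DIM('a) * d' * m"
    using exists_C1_gap_le_Ccost_gap_discretized[OF \<mu> \<nu> \<rho> quantize_borel_measurable[of d R]
        finite_range_quantize[OF d, of R] norm_quantize_le[OF d, of R]
        integrable_quantize_error[OF N(2) \<nu>(2) d, of R] quantize_borel_measurable[of d' 1]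
        finite_range_quantize[OF d', of 1] S_norm norm_diff_quantize_le[OF d', where R=1]]
    by (auto simp: m_def)
  then show ?thesis using T_error S_error by (intro bexI[of _ f]) auto
qed

lemma C1_gap_lower_bound:
  fixes \<mu> \<nu> :: "'a::euclidean_space measure"
  assumes \<mu>: "\<mu> \<in> prob_measures" "integrable \<mu> norm" and \<nu>: "\<nu> \<in> prob_measures" "integrable \<nu> norm"
    and f: "f \<in> C1"
  shows "- (\<integral>x. norm x \<partial>\<nu>) - (\<integral>x. norm x \<partial>\<mu>) \<le> (\<integral>x. f x \<partial>\<nu>) - (\<integral>x. f x \<partial>\<mu>)"
proof -
  interpret \<mu>: prob_space \<mu> using prob_measuresD(1)[OF \<mu>(1)] .
  interpret \<nu>: prob_space \<nu> using prob_measuresD(1)[OF \<nu>(1)] .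
  have "(\<integral>x. f 0 - norm x \<partial>\<nu>) \<le> (\<integral>x. f x \<partial>\<nu>)"
    using C1_diff_le[OF f, of 0] \<nu>(2) C1_integrable[OF f prob_measuresD(2)[OF \<nu>(1)] \<nu>.finite_measure_axioms \<nu>(2)]
    by (intro integral_mono) (auto simp: algebra_simps)
  moreover have "(\<integral>x. f x \<partial>\<mu>) \<le> (\<integral>x. f 0 + norm x \<partial>\<mu>)"
    using C1_diff_le[OF f, of _ 0] \<mu>(2) C1_integrable[OF f prob_measuresD(2)[OF \<mu>(1)] \<mu>.finite_measure_axioms \<mu>(2)]
    by (intro integral_mono) (auto simp: algebra_simps)
  ultimately show ?thesis using \<mu>(2) \<nu>(2) by (simp add: \<mu>.prob_space \<nu>.prob_space)
qed

lemma INF_eq_INF_by_approximation: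
  fixes F :: "'a \<Rightarrow> real" and G :: "'b \<Rightarrow> real"
  assumes "A \<noteq> {}" "B \<noteq> {}" and lower: "\<And>a. a \<in> A \<Longrightarrow> L \<le> F a"
    and FG: "\<And>b e. b \<in> B \<Longrightarrow> 0 < e \<Longrightarrow> \<exists>a\<in>A. F a \<le> G b + e"
    and GF: "\<And>a e. a \<in> A \<Longrightarrow> 0 < e \<Longrightarrow> \<exists>b\<in>B. G b \<le> F a + e"
  shows "(INF a\<in>A. F a) = (INF b\<in>B. G b)"
proof (rule antisym)
  have bdd_F: "bdd_below (F ` A)" using lower by (intro bdd_belowI2)
  have "L - 1 \<le> G b" if "b \<in> B" for b using FG[OF that, of 1] lower by force
  then have bdd_G: "bdd_below (G ` B)" by (intro bdd_belowI2)
  show "(INF a\<in>A. F a) \<le> (INF b\<in>B. G b)"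
  proof (rule cINF_greatest[OF assms(2)], rule field_le_epsilon)
    fix b e assume "b \<in> B" "0 < (e::real)"
    then obtain a where "a \<in> A" "F a \<le> G b + e" using FG by blast
    then show "(INF a\<in>A. F a) \<le> G b + e" using cINF_lower[OF bdd_F] by fastforce
  qed
  show "(INF b\<in>B. G b) \<le> (INF a\<in>A. F a)"
  proof (rule cINF_greatest[OF assms(1)], rule field_le_epsilon)
    fix a e assume "a \<in> A" "0 < (e::real)"
    then obtain b where "b \<in> B" "G b \<le> F a + e" using GF by blast
    then show "(INF b\<in>B. G b) \<le> F a + e" using cINF_lower[OF bdd_G] by fastforce
  qed
qed

theorem theorem1:
  fixes \<mu> \<nu> :: "('a::euclidean_space) measure"
  assumes "\<mu> \<in> prob_measures" and "\<nu> \<in> prob_measures"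
    and "integrable \<mu> (\<lambda>x. norm x)" and "integrable \<nu> (\<lambda>y. norm y)"
  shows "(INF f\<in>C1. (\<integral>x. f x \<partial>\<nu>) - (\<integral>x. f x \<partial>\<mu>))
       = (INF \<rho>\<in>P1. Ccost \<nu> \<rho> - Ccost \<mu> \<rho>)"
proof -
  have \<mu>: "\<mu> \<in> prob_measures" "integrable \<mu> norm" and \<nu>: "\<nu> \<in> prob_measures" "integrable \<nu> norm"
    using assms by simp_all
  have "(\<lambda>_. 0) \<in> (C1 :: ('a \<Rightarrow> real) set)" by (simp add: C1_def lipschitz_on_def convex_on_const)
  moreover from this have "(P1 :: 'a measure set) \<noteq> {}"
    using exists_P1_Ccost_gap_le_C1_gap[OF \<mu> \<nu>, of "\<lambda>_. 0" 1] by auto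
  ultimately show ?thesis
    using C1_gap_lower_bound[OF \<mu> \<nu>] exists_C1_gap_le_Ccost_gap[OF \<mu> \<nu>]
      exists_P1_Ccost_gap_le_C1_gap[OF \<mu> \<nu>]
    by (intro INF_eq_INF_by_approximation) auto
qed

end
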